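(* For every $\theta=(\theta_1,\theta_2)=((K_1,L_1),(K_2,L_2))\in\Theta$ and $j=1,2$, $$\nabla_{K_j}C(\theta_1,\theta_2)=2E^{y,j}_{K_1,K_2}\Sigma^y_{K_1,K_2},\qquad \nabla_{L_j}C(\theta_1,\theta_2)=2E^{z,j}_{L_1,L_2}\Sigma^z_{L_1,L_2}.$$
   Context: Fix $d,\ell\ge1$, $\gamma\in[0,1)$, $A,\bar A\in\mathbb R^{d\times d}$, $B_1,\bar B_1,B_2,\bar B_2\in\mathbb R^{d\times\ell}$, symmetric $Q,\bar Q\in\mathbb R^{d\times d}$, symmetric $R_1,\bar R_1,R_2,\bar R_2\in\mathbb R^{\ell\times\ell}$; $\tilde A=A+\bar A$, $\tilde B_i=B_i+\bar B_i$, $\tilde Q=Q+\bar Q$, $\tilde R_i=R_i+\bar R_i$. Noises: $(\epsilon^j_t)_{t\ge1}$ i.i.d. mean-zero square integrable in $\mathbb R^d$, $\epsilon^j_0\sim\mu^j_0$ square integrable, $j=0,1$, all independent. $\Theta$ is the set of $((K_1,L_1),(K_2,L_2))\in(\mathbb R^{\ell\times d})^4$ with $\gamma\|A-B_1K_1+B_2K_2\|^2<1$ and $\gamma\|\tilde A-\tilde B_1L_1+\tilde B_2L_2\|^2<1$. Processes: $y_{t+1}=(A-B_1K_1+B_2K_2)y_t+\epsilon^1_{t+1}$, $z_{t+1}=(\tilde A-\tilde B_1L_1+\tilde B_2L_2)z_t+\epsilon^0_{t+1}$. $C_y(K_1,K_2,\tilde y)=\mathbb E[\sum_t\gamma^t(y_t^\top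 Qy_t+y_t^\top K_1^\top R_1K_1y_t-y_t^\top K_2^\top R_2K_2y_t)\mid y_0=\tilde y]$, $C_z(L_1,L_2,\tilde z)=\mathbb E[\sum_t\gamma^t(z_t^\top\tilde Qz_t+z_t^\top L_1^\top\tilde R_1L_1z_t-z_t^\top L_2^\top\tilde R_2L_2z_t)\mid z_0=\tilde z]$, and $C(\theta_1,\theta_2)=\mathbb E_{\tilde y\sim\mu^1_0}[C_y(K_1,K_2,\tilde y)]+\mathbb E_{\tilde z\sim\mu^0_0}[C_z(L_1,L_2,\tilde z)]$. $P^y_{K_1,K_2}$ is the solution of $P=Q+K_1^\top R_1K_1-K_2^\top R_2K_2+\gamma(A-B_1K_1+B_2K_2)^\top P(A-B_1K_1+B_2K_2)$ and $P^z_{L_1,L_2}$ the solution of $P=\tilde Q+L_1^\top\tilde R_1L_1-L_2^\top\tilde R_2L_2+\gamma(\tilde A-\tilde B_1L_1+\tilde B_2L_2)^\top P(\tilde A-\tilde B_1L_1+\tilde B_2L_2)$. Writing $P=P^y_{K_1,K_2}$: $E^{y,1}_{K_1,K_2}=-\gamma B_1^\top PA+(R_1+\gamma B_1^\top PB_1)K_1-\gamma B_1^\top PB_2K_2$ and $E^{y,2}_{K_1,K_2}=\gamma B_2^\top PA-\gamma B_2^\top PB_1K_1+(-R_2+\gamma B_2^\top PB_2)K_2$; $E^{z,j}_{L_1,L_2}$ is defined identically with $(A,B_i,R_i,P^y_{K_1,K_2},K_i)$ replaced by $(\tilde A,\tilde B_i,\tilde R_i,P^z_{L_1,L_2},L_i)$.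 $\Sigma^y_{K_1,K_2}=\mathbb E[\sum_{t\ge0}\gamma^ty_ty_t^\top]$ with $y_0\sim\mu^1_0$, and $\Sigma^z_{L_1,L_2}=\mathbb E[\sum_{t\ge0}\gamma^tz_tz_t^\top]$ with $z_0\sim\mu^0_0$. $\nabla_{K_j}C$ denotes the $\ell\times d$ matrix of partial derivatives of $C$ with respect to the entries of $K_j$ (similarly for $L_j$). *)

theory Defs
  imports "HOL-Probability.Probability"
begin

text \<open>Matrices: a d x d matrix is real^'d^'d, a d x l matrix is real^'l^'d,
an l x d matrix is real^'d^'l (rows indexed by the outer index).\<close>

definition clmat :: "real^'d^'d \<Rightarrow> real^'l^'d \<Rightarrow> real^'l^'d \<Rightarrow> real^'d^'l \<Rightarrow> real^'d^'l \<Rightarrow> real^'d^'d" where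
  "clmat A B1 B2 K1 K2 = A - B1 ** K1 + B2 ** K2"

definition opnorm :: "real^'n^'m \<Rightarrow> real" where
  "opnorm M = onorm (\<lambda>x. M *v x)"

definition Theta ::
  "real \<Rightarrow> real^'d^'d \<Rightarrow> real^'d^'d \<Rightarrow> real^'l^'d \<Rightarrow> real^'l^'d \<Rightarrow> real^'l^'d \<Rightarrow> real^'l^'d
   \<Rightarrow> (((real^'d^'l) \<times> (real^'d^'l)) \<times> ((real^'d^'l) \<times> (real^'d^'l))) set" where
  "Theta \<gamma> A Ab B1 B1b B2 B2b =
     {((K1,L1),(K2,L2)). \<gamma> * (opnorm (clmat A B1 B2 K1 K2))\<^sup>2 < 1 \<and>
        \<gamma> * (opnorm (clmat (A + Ab) (B1 + B1b) (B2 + B2b) L1 L2))\<^sup>2 < 1}"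

primrec traj :: "real^'d^'d \<Rightarrow> (nat \<Rightarrow> 'a \<Rightarrow> real^'d) \<Rightarrow> ('a \<Rightarrow> real^'d) \<Rightarrow> nat \<Rightarrow> 'a \<Rightarrow> real^'d" where
  "traj Mc eps x0 0 = x0"
| "traj Mc eps x0 (Suc t) = (\<lambda>\<omega>. Mc *v traj Mc eps x0 t \<omega> + eps (Suc t) \<omega>)"

definition stage_cost :: "real^'d^'d \<Rightarrow> real^'l^'l \<Rightarrow> real^'l^'l \<Rightarrow> real^'d^'l \<Rightarrow> real^'d^'l \<Rightarrow> real^'d \<Rightarrow> real" where
  "stage_cost Q R1 R2 K1 K2 x =
     x \<bullet> (Q *v x) + (K1 *v x) \<bullet> (R1 *v (K1 *v x)) - (K2 *v x) \<bullet> (R2 *v (K2 *v x))"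

definition cond_cost ::
  "'a measure \<Rightarrow> (nat \<Rightarrow> 'a \<Rightarrow> real^'d) \<Rightarrow> real \<Rightarrow> real^'d^'d \<Rightarrow> real^'l^'d \<Rightarrow> real^'l^'d
   \<Rightarrow> real^'d^'d \<Rightarrow> real^'l^'l \<Rightarrow> real^'l^'l \<Rightarrow> real^'d^'l \<Rightarrow> real^'d^'l \<Rightarrow> real^'d \<Rightarrow> real" where
  "cond_cost M eps \<gamma> A B1 B2 Q R1 R2 K1 K2 x0 =
     (\<integral>\<omega>. (\<Sum>t. \<gamma> ^ t * stage_cost Q R1 R2 K1 K2 (traj (clmat A B1 B2 K1 K2) eps (\<lambda>_. x0) t \<omega>)) \<partial>M)"

definition init_cost ::
  "'a measure \<Rightarrow> (nat \<Rightarrow> 'a \<Rightarrow> real^'d) \<Rightarrow> real \<Rightarrow> real^'d^'d \<Rightarrow> real^'l^'d \<Rightarrow> real^'l^'d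
   \<Rightarrow> real^'d^'d \<Rightarrow> real^'l^'l \<Rightarrow> real^'l^'l \<Rightarrow> real^'d^'l \<Rightarrow> real^'d^'l \<Rightarrow> real" where
  "init_cost M eps \<gamma> A B1 B2 Q R1 R2 K1 K2 =
     (\<integral>x0. cond_cost M eps \<gamma> A B1 B2 Q R1 R2 K1 K2 x0 \<partial>(distr M borel (eps 0)))"

definition total_cost ::
  "'a measure \<Rightarrow> (nat \<Rightarrow> 'a \<Rightarrow> real^'d) \<Rightarrow> (nat \<Rightarrow> 'a \<Rightarrow> real^'d) \<Rightarrow> real
   \<Rightarrow> real^'d^'d \<Rightarrow> real^'d^'d \<Rightarrow> real^'l^'d \<Rightarrow> real^'l^'d \<Rightarrow> real^'l^'d \<Rightarrow> real^'l^'d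
   \<Rightarrow> real^'d^'d \<Rightarrow> real^'d^'d \<Rightarrow> real^'l^'l \<Rightarrow> real^'l^'l \<Rightarrow> real^'l^'l \<Rightarrow> real^'l^'l
   \<Rightarrow> ((real^'d^'l) \<times> (real^'d^'l)) \<Rightarrow> ((real^'d^'l) \<times> (real^'d^'l)) \<Rightarrow> real" where
  "total_cost M eps1 eps0 \<gamma> A Ab B1 B1b B2 B2b Q Qb R1 R1b R2 R2b \<theta>1 \<theta>2 =
     (case \<theta>1 of (K1, L1) \<Rightarrow> case \<theta>2 of (K2, L2) \<Rightarrow>
        init_cost M eps1 \<gamma> A B1 B2 Q R1 R2 K1 K2
      + init_cost M eps0 \<gamma> (A + Ab) (B1 + B1b) (B2 + B2b) (Q + Qb) (R1 + R1b) (R2 + R2b) L1 L2)"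

definition Pmat :: "real \<Rightarrow> real^'d^'d \<Rightarrow> real^'l^'d \<Rightarrow> real^'l^'d
   \<Rightarrow> real^'d^'d \<Rightarrow> real^'l^'l \<Rightarrow> real^'l^'l \<Rightarrow> real^'d^'l \<Rightarrow> real^'d^'l \<Rightarrow> real^'d^'d" where
  "Pmat \<gamma> A B1 B2 Q R1 R2 K1 K2 =
     (THE P. P = Q + transpose K1 ** R1 ** K1 - transpose K2 ** R2 ** K2
                 + \<gamma> *\<^sub>R (transpose (clmat A B1 B2 K1 K2) ** P ** clmat A B1 B2 K1 K2))"

definition Emat1 :: "real \<Rightarrow> real^'d^'d \<Rightarrow> real^'l^'d \<Rightarrow> real^'l^'d
   \<Rightarrow> real^'d^'d \<Rightarrow> real^'l^'l \<Rightarrow> real^'l^'l \<Rightarrow> real^'d^'l \<Rightarrow> real^'d^'l \<Rightarrow> real^'d^'l" where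
  "Emat1 \<gamma> A B1 B2 Q R1 R2 K1 K2 =
     (let P = Pmat \<gamma> A B1 B2 Q R1 R2 K1 K2 in
       - (\<gamma> *\<^sub>R (transpose B1 ** P ** A)) + (R1 + \<gamma> *\<^sub>R (transpose B1 ** P ** B1)) ** K1
       - \<gamma> *\<^sub>R (transpose B1 ** P ** B2 ** K2))"

definition Emat2 :: "real \<Rightarrow> real^'d^'d \<Rightarrow> real^'l^'d \<Rightarrow> real^'l^'d
   \<Rightarrow> real^'d^'d \<Rightarrow> real^'l^'l \<Rightarrow> real^'l^'l \<Rightarrow> real^'d^'l \<Rightarrow> real^'d^'l \<Rightarrow> real^'d^'l" where
  "Emat2 \<gamma> A B1 B2 Q R1 R2 K1 K2 =
     (let P = Pmat \<gamma> A B1 B2 Q R1 R2 K1 K2 in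
       \<gamma> *\<^sub>R (transpose B2 ** P ** A) - \<gamma> *\<^sub>R (transpose B2 ** P ** B1 ** K1)
       + (- R2 + \<gamma> *\<^sub>R (transpose B2 ** P ** B2)) ** K2)"

definition outer :: "real^'d \<Rightarrow> real^'d^'d" where
  "outer x = (\<chi> i j. x $ i * x $ j)"

definition Sigma_mat :: "'a measure \<Rightarrow> (nat \<Rightarrow> 'a \<Rightarrow> real^'d) \<Rightarrow> real \<Rightarrow> real^'d^'d \<Rightarrow> real^'d^'d" where
  "Sigma_mat M eps \<gamma> Mc = (\<integral>\<omega>. (\<Sum>t. (\<gamma> ^ t) *\<^sub>R outer (traj Mc eps (eps 0) t \<omega>)) \<partial>M)"

definition munit :: "'l \<Rightarrow> 'd \<Rightarrow> real^'d^'l" where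
  "munit i k = (\<chi> a b. if a = i \<and> b = k then 1 else 0)"

definition is_matrix_gradient :: "(real^'d^'l \<Rightarrow> real) \<Rightarrow> real^'d^'l \<Rightarrow> real^'d^'l \<Rightarrow> bool" where
  "is_matrix_gradient f K G \<longleftrightarrow>
     (\<forall>i k. ((\<lambda>s. f (K + s *\<^sub>R munit i k)) has_real_derivative (G $ i $ k)) (at 0))"

definition noise_ok :: "'a measure \<Rightarrow> (nat \<Rightarrow> 'a \<Rightarrow> real^'d) \<Rightarrow> (nat \<Rightarrow> 'a \<Rightarrow> real^'d) \<Rightarrow> bool" where
  "noise_ok M eps1 eps0 \<longleftrightarrow>
     prob_space M \<and>
     prob_space.indep_vars M (\<lambda>_. borel) (\<lambda>(j::bool, t::nat). if j then eps1 t else eps0 t) UNIV \<and>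
     (\<forall>eps\<in>{eps1, eps0}.
        (\<forall>t. eps t \<in> borel_measurable M \<and> integrable M (\<lambda>\<omega>. (norm (eps t \<omega>))\<^sup>2)) \<and>
        (\<forall>t\<ge>1. distr M borel (eps t) = distr M borel (eps 1) \<and> (\<integral>\<omega>. eps t \<omega> \<partial>M) = 0))"

end

theory Submission
  imports Defs
begin

text \<open>
  The cost splits into two independent problems, for \<open>y\<close> and for \<open>z\<close>, which are treated alike.
  For a closed loop \<open>N\<close> with \<open>\<gamma> \<parallel>N\<parallel>\<^sup>2 < 1\<close> the second moments \<open>E[y\<^sub>t y\<^sub>t\<^sup>T]\<close> obey
  \<open>m\<^sub>t\<^sub>+\<^sub>1 = N m\<^sub>t N\<^sup>T + E[\<epsilon>\<^sub>1 \<epsilon>\<^sub>1\<^sup>T]\<close>, so \<open>\<Sigma> = \<Sum>\<^sub>t \<gamma>\<^sup>t m\<^sub>t\<close> is the unique solution of the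
  discrete Lyapunov equation \<open>\<Sigma> = W + \<gamma> N \<Sigma> N\<^sup>T\<close>, where \<open>W = E[\<epsilon>\<^sub>0 \<epsilon>\<^sub>0\<^sup>T] + \<gamma>/(1-\<gamma>) E[\<epsilon>\<^sub>1 \<epsilon>\<^sub>1\<^sup>T]\<close>
  does not depend on the gains; the cost is \<open>tr (S \<Sigma>)\<close> with \<open>S = Q + K\<^sub>1\<^sup>T R\<^sub>1 K\<^sub>1 - K\<^sub>2\<^sup>T R\<^sub>2 K\<^sub>2\<close>.
  Let \<open>P\<close> solve the adjoint equation \<open>P = S + \<gamma> N\<^sup>T P N\<close>. Comparing the two equations under the
  trace gives, for the perturbed gain \<open>K + sU\<close>, the exact increment
  \<open>s tr ((U\<^sup>T E + E\<^sup>T U) \<Sigma>(s)) + s\<^sup>2 tr (U\<^sup>T G U \<Sigma>(s))\<close>, and \<open>\<Sigma>(s)\<close> is continuous in \<open>s\<close> because the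
  Lyapunov equation is a uniform contraction near \<open>N\<close>. Taking \<open>U\<close> a matrix unit and using the symmetry
  of \<open>\<Sigma>\<close> gives the gradient \<open>2 E \<Sigma>\<close>.
\<close>

section \<open>Matrix algebra and operator norms\<close>

lemma matrix_add_rdistrib: "((A::'a::semiring_1^'n^'m) + B) ** (C::'a^'p^'n) = A ** C + B ** C"
  by (simp add: matrix_matrix_mult_def vec_eq_iff sum.distrib algebra_simps)

lemma matrix_diff_ldistrib: "(A::'a::ring_1^'n^'m) ** ((B::'a^'p^'n) - C) = A ** B - A ** C"
  by (simp add: matrix_matrix_mult_def vec_eq_iff sum_subtractf algebra_simps)

lemma matrix_diff_rdistrib: "((A::'a::ring_1^'n^'m) - B) ** (C::'a^'p^'n) = A ** C - B ** C"
  by (simp add: matrix_matrix_mult_def vec_eq_iff sum_subtractf algebra_simps)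

lemma matrix_uminus_left: "(- (A::'a::ring_1^'n^'m)) ** (C::'a^'p^'n) = - (A ** C)"
  by (simp add: matrix_matrix_mult_def vec_eq_iff sum_negf)

lemma matrix_uminus_right: "(A::'a::ring_1^'n^'m) ** (- (C::'a^'p^'n)) = - (A ** C)"
  by (simp add: matrix_matrix_mult_def vec_eq_iff sum_negf)

lemma transpose_add: "transpose ((A::'a::plus^'n^'m) + B) = transpose A + transpose B"
  by (simp add: transpose_def vec_eq_iff)

lemma transpose_diff: "transpose ((A::'a::minus^'n^'m) - B) = transpose A - transpose B"
  by (simp add: transpose_def vec_eq_iff)

lemma transpose_uminus: "transpose (- (A::'a::uminus^'n^'m)) = - transpose A"
  by (simp add: transpose_def vec_eq_iff)

lemma transpose_zero [simp]: "transpose 0 = 0"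
  by (simp add: transpose_def vec_eq_iff)

lemma matrix_scaleR_left: "(c *\<^sub>R (A::'a::real_algebra_1^'n^'m)) ** B = c *\<^sub>R (A ** B)"
  by (simp add: scalar_matrix_assoc)

lemma matrix_scaleR_right: "(A::'a::real_algebra_1^'n^'m) ** (c *\<^sub>R B) = c *\<^sub>R (A ** B)"
  by (simp add: matrix_scalar_ac scalar_matrix_assoc)

lemmas matrix_algebra_simps =
  matrix_add_ldistrib matrix_add_rdistrib matrix_diff_ldistrib matrix_diff_rdistrib
  matrix_uminus_left matrix_uminus_right matrix_scaleR_left matrix_scaleR_right matrix_mul_assoc
  transpose_add transpose_diff transpose_uminus transpose_scalar matrix_transpose_mul

lemma trace_transpose: "trace (transpose A) = trace A"
  by (simp add: trace_def transpose_def)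

lemma trace_scaleR: "trace (c *\<^sub>R (A::real^'n^'n)) = c * trace A"
  by (simp add: trace_def sum_distrib_left)

lemma bounded_linear_matrix_sandwich:
  "bounded_linear (\<lambda>X::real^'p^'n. (A::real^'n^'m) ** X ** (B::real^'q^'p))"
  by (auto intro!: linearI simp: matrix_algebra_simps linear_conv_bounded_linear[symmetric])

lemma bounded_linear_trace_mult: "bounded_linear (\<lambda>X::real^'n^'m. trace ((A::real^'m^'n) ** X))"
  by (auto intro!: linearI simp: matrix_add_ldistrib trace_add matrix_scaleR_right trace_scaleR
      linear_conv_bounded_linear[symmetric])

lemma bounded_linear_transpose: "bounded_linear (transpose :: real^'n^'m \<Rightarrow> real^'m^'n)"
  by (auto intro!: linearI simp: transpose_add transpose_scalar linear_conv_bounded_linear[symmetric])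

lemma bounded_linear_matrix_mult_left: "bounded_linear (\<lambda>X::real^'p^'n. (A::real^'n^'m) ** X)"
  by (auto intro!: linearI simp: matrix_algebra_simps linear_conv_bounded_linear[symmetric])

lemma bounded_linear_trace: "bounded_linear (trace :: real^'n^'n \<Rightarrow> real)"
  by (auto intro!: linearI simp: trace_add trace_scaleR linear_conv_bounded_linear[symmetric])

lemma tendsto_matrix_mult [tendsto_intros]:
  fixes f :: "'a \<Rightarrow> real^'n^'m" and g :: "'a \<Rightarrow> real^'p^'n"
  shows "(f \<longlongrightarrow> A) F \<Longrightarrow> (g \<longlongrightarrow> B) F \<Longrightarrow> ((\<lambda>x. f x ** g x) \<longlongrightarrow> A ** B) F"
  unfolding matrix_matrix_mult_def by (intro tendsto_intros)

lemma tendsto_transpose [tendsto_intros]: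
  fixes f :: "'a \<Rightarrow> real^'n^'m"
  shows "(f \<longlongrightarrow> A) F \<Longrightarrow> ((\<lambda>x. transpose (f x)) \<longlongrightarrow> transpose A) F"
  unfolding transpose_def by (intro tendsto_intros)

lemma tendsto_trace [tendsto_intros]:
  fixes f :: "'a \<Rightarrow> real^'n^'n"
  shows "(f \<longlongrightarrow> A) F \<Longrightarrow> ((\<lambda>x. trace (f x)) \<longlongrightarrow> trace A) F"
  unfolding trace_def by (intro tendsto_intros)

lemma norm_matrix_vector_mult_le: "norm (N *v v) \<le> opnorm N * norm v"
  unfolding opnorm_def by (rule onorm) simp

lemma opnorm_nonneg: "0 \<le> opnorm N"
  unfolding opnorm_def by (rule onorm_pos_le) simp

lemma opnorm_le: "0 \<le> c \<Longrightarrow> (\<And>v. norm (N *v v) \<le> c * norm v) \<Longrightarrow> opnorm N \<le> c"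
  unfolding opnorm_def by (rule onorm_bound)

lemma norm_transpose_matrix_vector_mult_le: "norm (transpose N *v v) \<le> opnorm N * norm v"
proof -
  let ?w = "transpose N *v v"
  have "norm ?w * norm ?w = v \<bullet> (N *v ?w)"
    by (simp add: dot_lmul_matrix[symmetric] flip: power2_norm_eq_inner power2_eq_square)
  also have "\<dots> \<le> norm v * (opnorm N * norm ?w)"
    by (rule order_trans[OF Cauchy_Schwarz_ineq2[THEN order_trans[OF abs_ge_self]]])
       (simp add: mult_left_mono norm_matrix_vector_mult_le)
  finally show ?thesis
    by (cases "norm ?w = 0") (auto simp: opnorm_nonneg mult_ac mult_le_cancel_right)
qed

lemma opnorm_transpose: "opnorm (transpose N) = opnorm N"
  by (metis antisym opnorm_le opnorm_nonneg norm_transpose_matrix_vector_mult_le transpose_transpose)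

lemma norm_matrix_sq_rows: "(norm (X::real^'n^'m))^2 = (\<Sum>i\<in>UNIV. (norm (X $ i))^2)"
  by (simp add: power2_norm_eq_inner inner_vec_def)

lemma norm_vec_sq: "(norm (x::real^'n))^2 = (\<Sum>i\<in>UNIV. (x $ i)^2)"
  by (simp add: norm_vec_def L2_set_def sum_nonneg)

lemma norm_transpose: "norm (transpose (X::real^'n^'m)) = norm X"
proof -
  have "(norm (transpose X))^2 = (norm X)^2"
    unfolding norm_matrix_sq_rows norm_vec_sq transpose_def by (simp, subst sum.swap, simp)
  then show ?thesis by (simp add: power2_eq_iff_nonneg)
qed

lemma norm_matrix_mult_transpose_le: "norm (X ** transpose (N::real^'n^'m)) \<le> opnorm N * norm X"
proof -
  have rows: "(X ** transpose N) $ i = N *v (X $ i)" for i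
    by (simp add: vec_eq_iff matrix_matrix_mult_def matrix_vector_mult_def transpose_def mult.commute)
  have "(norm (X ** transpose N))^2 \<le> (\<Sum>i\<in>UNIV. (opnorm N * norm (X $ i))^2)"
    unfolding norm_matrix_sq_rows rows by (intro sum_mono power_mono norm_matrix_vector_mult_le) simp
  also have "\<dots> = (opnorm N * norm X)^2"
    by (simp add: power_mult_distrib norm_matrix_sq_rows[of X] sum_distrib_left)
  finally show ?thesis by (rule power2_le_imp_le) (simp add: opnorm_nonneg)
qed

lemma norm_matrix_mult_le: "norm ((N::real^'n^'m) ** X) \<le> opnorm N * norm X"
  by (metis matrix_transpose_mul norm_transpose norm_matrix_mult_transpose_le)

lemma norm_congruence_le: "norm (N ** X ** transpose N) \<le> (opnorm N)^2 * norm X"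
proof -
  have "norm (N ** X ** transpose N) \<le> opnorm N * (opnorm N * norm X)"
    by (rule order_trans[OF norm_matrix_mult_transpose_le mult_left_mono[OF norm_matrix_mult_le opnorm_nonneg]])
  then show ?thesis by (simp add: power2_eq_square mult_ac)
qed

lemma opnorm_le_norm: "opnorm N \<le> norm N"
proof (rule opnorm_le)
  fix v
  have "(norm (N *v v))^2 \<le> (\<Sum>i\<in>UNIV. (norm (N $ i) * norm v)^2)"
    unfolding norm_vec_sq matrix_vector_mul_component
    by (intro sum_mono) (metis Cauchy_Schwarz_ineq2 abs_ge_zero power_mono power2_abs)
  also have "\<dots> = (norm N * norm v)^2"
    by (simp add: power_mult_distrib norm_matrix_sq_rows[of N] sum_distrib_right)
  finally show "norm (N *v v) \<le> norm N * norm v" by (rule power2_le_imp_le) simp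
qed simp

lemma tendsto_opnorm:
  assumes "(f \<longlongrightarrow> N) F"
  shows "((\<lambda>x. opnorm (f x)) \<longlongrightarrow> opnorm N) F"
proof -
  have triangle: "opnorm A \<le> opnorm B + norm (A - B)" for A B :: "real^'n^'m"
  proof (rule opnorm_le)
    fix v
    have "norm (A *v v) \<le> norm (B *v v) + norm ((A - B) *v v)"
      by (metis add_diff_cancel_left' diff_add_cancel matrix_vector_mult_diff_rdistrib norm_triangle_ineq)
    also have "\<dots> \<le> opnorm B * norm v + opnorm (A - B) * norm v"
      by (intro add_mono norm_matrix_vector_mult_le)
    also have "\<dots> \<le> (opnorm B + norm (A - B)) * norm v"
      by (simp add: distrib_right mult_right_mono opnorm_le_norm)
    finally show "norm (A *v v) \<le> (opnorm B + norm (A - B)) * norm v" .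
  qed (simp add: add_nonneg_nonneg opnorm_nonneg)
  have "((\<lambda>x. opnorm (f x) - opnorm N) \<longlongrightarrow> 0) F"
  proof (rule Lim_null_comparison)
    show "\<forall>\<^sub>F x in F. norm (opnorm (f x) - opnorm N) \<le> norm (f x - N)"
    proof (intro always_eventually allI)
      fix x
      show "norm (opnorm (f x) - opnorm N) \<le> norm (f x - N)"
        using triangle[of "f x" N] triangle[of N "f x"] norm_minus_commute[of N "f x"] by simp
    qed
    show "((\<lambda>x. norm (f x - N)) \<longlongrightarrow> 0) F"
      using assms by (simp add: tendsto_norm_zero_iff LIM_zero)
  qed
  then show ?thesis by (rule LIM_zero_cancel)
qed

lemma eventually_scaled_opnorm_less:
  assumes "(f \<longlongrightarrow> N) F" "\<gamma> * (opnorm N)^2 < c"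
  shows "\<forall>\<^sub>F x in F. \<gamma> * (opnorm (f x))^2 < c"
proof -
  have "((\<lambda>x. \<gamma> * (opnorm (f x))^2) \<longlongrightarrow> \<gamma> * (opnorm N)^2) F"
    by (intro tendsto_intros tendsto_opnorm assms(1))
  then show ?thesis using assms(2) by (rule order_tendstoD)
qed

section \<open>The discrete Lyapunov equation\<close>

text \<open>The \<open>THE\<close> is only meaningful when \<open>\<gamma> \<parallel>N\<parallel>\<^sup>2 < 1\<close>, where
  \<open>X \<mapsto> W + \<gamma> N X N\<^sup>T\<close> is a contraction.\<close>
definition discrete_lyapunov :: "real \<Rightarrow> real^'n^'n \<Rightarrow> real^'n^'n \<Rightarrow> real^'n^'n" where
  "discrete_lyapunov \<gamma> N W = (THE X. X = W + \<gamma> *\<^sub>R (N ** X ** transpose N))"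

lemma discrete_lyapunov_unique:
  assumes "0 \<le> \<gamma>" "\<gamma> * (opnorm N)^2 < 1"
  shows "X = W + \<gamma> *\<^sub>R (N ** X ** transpose N) \<longleftrightarrow> X = discrete_lyapunov \<gamma> N W"
proof -
  let ?f = "\<lambda>X. W + \<gamma> *\<^sub>R (N ** X ** transpose N)"
  have "dist (?f X) (?f Y) \<le> \<gamma> * (opnorm N)^2 * dist X Y" for X Y
  proof -
    have "dist (?f X) (?f Y) = \<gamma> * norm (N ** (X - Y) ** transpose N)"
      using assms(1) by (simp add: dist_norm matrix_algebra_simps flip: scaleR_diff_right)
    also have "\<dots> \<le> \<gamma> * ((opnorm N)^2 * norm (X - Y))"
      by (rule mult_left_mono[OF norm_congruence_le assms(1)])
    finally show ?thesis by (simp add: dist_norm mult_ac)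
  qed
  then have "\<exists>!X. ?f X = X"
    using assms by (intro banach_fix_type) auto
  then obtain X0 where fixed: "?f X0 = X0" and unique: "\<And>Y. ?f Y = Y \<Longrightarrow> Y = X0"
    by blast
  have X0: "discrete_lyapunov \<gamma> N W = X0"
    unfolding discrete_lyapunov_def
  proof (rule the_equality)
    show "X0 = ?f X0" using fixed by simp
    show "Y = X0" if "Y = ?f Y" for Y by (rule unique) (rule that[symmetric])
  qed
  show ?thesis
  proof
    show "X = discrete_lyapunov \<gamma> N W" if "X = ?f X"
      unfolding X0 by (rule unique) (rule that[symmetric])
    show "X = ?f X" if "X = discrete_lyapunov \<gamma> N W"
      using that fixed by (simp add: X0)
  qed
qed

lemma discrete_lyapunov_eq:
  assumes "0 \<le> \<gamma>" "\<gamma> * (opnorm N)^2 < 1"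
  shows "discrete_lyapunov \<gamma> N W = W + \<gamma> *\<^sub>R (N ** discrete_lyapunov \<gamma> N W ** transpose N)"
  using discrete_lyapunov_unique[OF assms] by blast

lemma bounded_linear_discrete_lyapunov:
  assumes "0 \<le> \<gamma>" "\<gamma> * (opnorm N)^2 < 1"
  shows "bounded_linear (discrete_lyapunov \<gamma> N)"
proof -
  let ?L = "discrete_lyapunov \<gamma> N"
  note unique = discrete_lyapunov_unique[OF assms, THEN iffD1, symmetric]
  note eq = discrete_lyapunov_eq[OF assms]
  have "linear ?L"
  proof
    fix V W
    have "?L V + ?L W = (V + \<gamma> *\<^sub>R (N ** ?L V ** transpose N)) + (W + \<gamma> *\<^sub>R (N ** ?L W ** transpose N))"
      using eq[of V] eq[of W] by (rule arg_cong2[where f="(+)"])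
    also have "\<dots> = (V + W) + \<gamma> *\<^sub>R (N ** (?L V + ?L W) ** transpose N)"
      by (simp add: matrix_algebra_simps scaleR_add_right)
    finally show "?L (V + W) = ?L V + ?L W" by (rule unique)
  next
    fix c V
    have "c *\<^sub>R ?L V = c *\<^sub>R (V + \<gamma> *\<^sub>R (N ** ?L V ** transpose N))"
      using eq[of V] by (rule arg_cong)
    also have "\<dots> = c *\<^sub>R V + \<gamma> *\<^sub>R (N ** (c *\<^sub>R ?L V) ** transpose N)"
      by (simp add: matrix_algebra_simps scaleR_add_right mult.commute)
    finally show "?L (c *\<^sub>R V) = c *\<^sub>R ?L V" by (rule unique)
  qed
  then show ?thesis by (simp add: linear_conv_bounded_linear)
qed

lemma discrete_lyapunov_symmetric:
  assumes "0 \<le> \<gamma>" "\<gamma> * (opnorm N)^2 < 1" "transpose W = W"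
  shows "transpose (discrete_lyapunov \<gamma> N W) = discrete_lyapunov \<gamma> N W"
proof -
  let ?X = "discrete_lyapunov \<gamma> N W"
  have "transpose ?X = transpose (W + \<gamma> *\<^sub>R (N ** ?X ** transpose N))"
    using discrete_lyapunov_eq[OF assms(1,2)] by (rule arg_cong)
  also have "\<dots> = W + \<gamma> *\<^sub>R (N ** transpose ?X ** transpose N)"
    by (simp add: matrix_algebra_simps assms(3))
  finally show ?thesis by (rule discrete_lyapunov_unique[OF assms(1,2), THEN iffD1])
qed

lemma trace_lyapunov_difference:
  fixes X W P S S0 N N0 :: "real^'n^'n"
  assumes X: "X = W + \<gamma> *\<^sub>R (N ** X ** transpose N)"
    and P: "P = S0 + \<gamma> *\<^sub>R (transpose N0 ** P ** N0)"
  shows "trace (S ** X) - trace (P ** W) =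
    trace ((S - S0 + \<gamma> *\<^sub>R (transpose N ** P ** N - transpose N0 ** P ** N0)) ** X)"
proof -
  have W: "W = X - \<gamma> *\<^sub>R (N ** X ** transpose N)" using X by (simp add: algebra_simps)
  have cyclic: "trace (P ** N ** X ** transpose N) = trace (transpose N ** P ** N ** X)"
    by (metis matrix_mul_assoc trace_mul_sym)
  have "trace (P ** X) = trace (S0 ** X) + \<gamma> * trace (transpose N0 ** P ** N0 ** X)"
    by (subst P) (simp add: matrix_algebra_simps trace_add trace_scaleR)
  then show ?thesis
    unfolding W by (simp add: matrix_algebra_simps trace_add trace_sub trace_scaleR cyclic right_diff_distrib)
qed

lemma discrete_lyapunov_tendsto:
  assumes "0 \<le> \<gamma>" "\<gamma> * (opnorm N)^2 < 1" "(f \<longlongrightarrow> N) F"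
  shows "((\<lambda>x. discrete_lyapunov \<gamma> (f x) W) \<longlongrightarrow> discrete_lyapunov \<gamma> N W) F"
proof -
  define q where "q = (1 + \<gamma> * (opnorm N)^2) / 2"
  define X where "X x = discrete_lyapunov \<gamma> (f x) W" for x
  define X0 where "X0 = discrete_lyapunov \<gamma> N W"
  define D where "D x = f x ** X0 ** transpose (f x) - N ** X0 ** transpose N" for x
  have q: "\<gamma> * (opnorm N)^2 < q" "q < 1" using assms(2) by (auto simp: q_def)
  have bound: "\<forall>\<^sub>F x in F. norm (X x - X0) \<le> \<gamma> * norm (D x) / (1 - q)"
    using eventually_scaled_opnorm_less[OF assms(3) q(1)]
  proof eventually_elim
    case (elim x)
    have "X x = W + \<gamma> *\<^sub>R (f x ** X x ** transpose (f x))"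
      unfolding X_def by (rule discrete_lyapunov_eq[OF assms(1)]) (use elim q(2) in linarith)
    moreover have "X0 = W + \<gamma> *\<^sub>R (N ** X0 ** transpose N)"
      unfolding X0_def by (rule discrete_lyapunov_eq[OF assms(1,2)])
    ultimately have "X x - X0 = (W + \<gamma> *\<^sub>R (f x ** X x ** transpose (f x))) - (W + \<gamma> *\<^sub>R (N ** X0 ** transpose N))"
      by (rule arg_cong2[where f="(-)"])
    also have "\<dots> = \<gamma> *\<^sub>R (f x ** (X x - X0) ** transpose (f x) + D x)"
      by (simp add: D_def matrix_algebra_simps algebra_simps)
    finally have eq: "X x - X0 = \<gamma> *\<^sub>R (f x ** (X x - X0) ** transpose (f x) + D x)" .
    have "norm (X x - X0) = \<gamma> * norm (f x ** (X x - X0) ** transpose (f x) + D x)"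
      by (subst eq) (use assms(1) in simp)
    also have "\<dots> \<le> \<gamma> * ((opnorm (f x))^2 * norm (X x - X0) + norm (D x))"
      by (intro mult_left_mono[OF _ assms(1)] order_trans[OF norm_triangle_ineq] add_mono
          norm_congruence_le order_refl)
    also have "\<dots> \<le> q * norm (X x - X0) + \<gamma> * norm (D x)"
      using elim by (simp add: distrib_left mult_right_mono flip: mult.assoc)
    finally show ?case using q(2) by (simp add: field_simps)
  qed
  have "((\<lambda>x. \<gamma> * norm (D x) / (1 - q)) \<longlongrightarrow> \<gamma> * norm (N ** X0 ** transpose N - N ** X0 ** transpose N) / (1 - q)) F"
    unfolding D_def by (intro tendsto_intros assms(3)) (use q(2) in simp)
  then have "((\<lambda>x. \<gamma> * norm (D x) / (1 - q)) \<longlongrightarrow> 0) F"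
    by simp
  with bound have "((\<lambda>x. X x - X0) \<longlongrightarrow> 0) F"
    by (rule Lim_null_comparison)
  then show ?thesis unfolding X_def X0_def by (rule LIM_zero_cancel)
qed

lemma summable_real_of_nat_mult_power:
  fixes b :: real assumes "0 \<le> b" "b < 1"
  shows "summable (\<lambda>n. real n * b ^ n)"
proof -
  have "summable (\<lambda>n. diffs (\<lambda>_. 1::real) n * b ^ n)"
    by (rule termdiff_converges[where K=1]) (use assms in \<open>auto intro!: summable_geometric\<close>)
  then have "summable (\<lambda>n. real (Suc n) * b ^ n)" by (simp add: diffs_def)
  then show ?thesis
    by (rule summable_comparison_test[rotated]) (use assms in \<open>auto intro!: exI[of _ 0] mult_right_mono\<close>)
qed

lemma discounted_recursion_bound:
  assumes m: "\<And>t. m (Suc t) = N ** m t ** transpose N + W"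
    and "0 \<le> \<gamma>" "\<gamma> * (opnorm N)^2 \<le> b" "\<gamma> \<le> b"
  shows "\<gamma>^t * norm (m t) \<le> (norm (m 0) + real t * norm W) * b^t"
proof (induction t)
  case (Suc t)
  have "\<gamma>^Suc t * norm (m (Suc t)) \<le> \<gamma>^Suc t * ((opnorm N)^2 * norm (m t) + norm W)"
    unfolding m using \<open>0 \<le> \<gamma>\<close>
    by (auto intro!: mult_left_mono order_trans[OF norm_triangle_ineq] norm_congruence_le)
  also have "\<dots> = (\<gamma> * (opnorm N)^2) * (\<gamma>^t * norm (m t)) + \<gamma>^Suc t * norm W"
    by (simp add: algebra_simps)
  also have "\<dots> \<le> b * ((norm (m 0) + real t * norm W) * b^t) + b^Suc t * norm W"
  proof (rule add_mono)
    show "(\<gamma> * (opnorm N)^2) * (\<gamma>^t * norm (m t)) \<le> b * ((norm (m 0) + real t * norm W) * b^t)"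
      using assms(2-4) by (intro mult_mono Suc.IH) auto
    show "\<gamma>^Suc t * norm W \<le> b^Suc t * norm W"
      using assms(2,4) by (intro mult_right_mono power_mono) auto
  qed
  also have "\<dots> = (norm (m 0) + real (Suc t) * norm W) * b^Suc t"
    by (simp add: algebra_simps)
  finally show ?case .
qed simp

lemma discounted_recursion_sums:
  assumes m: "\<And>t. m (Suc t) = N ** m t ** transpose N + W"
    and "0 \<le> \<gamma>" "\<gamma> < 1" "\<gamma> * (opnorm N)^2 < 1"
  shows "summable (\<lambda>t. norm (\<gamma>^t *\<^sub>R m t))"
    and "(\<Sum>t. \<gamma>^t *\<^sub>R m t) = discrete_lyapunov \<gamma> N (m 0 + (\<gamma> / (1 - \<gamma>)) *\<^sub>R W)"
proof -
  define b where "b = max \<gamma> (\<gamma> * (opnorm N)^2)"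
  have b: "0 \<le> b" "b < 1" using assms(2-4) by (auto simp: b_def)
  have "summable (\<lambda>t. norm (m 0) * b^t + norm W * (real t * b^t))"
    using b by (intro summable_add summable_mult summable_geometric summable_real_of_nat_mult_power) auto
  then show norms: "summable (\<lambda>t. norm (\<gamma>^t *\<^sub>R m t))"
    using discounted_recursion_bound[where m=m and N=N and W=W, OF m assms(2), of b] assms(2)
    by (elim summable_comparison_test[rotated]) (auto simp: b_def algebra_simps)
  define S where "S = (\<Sum>t. \<gamma>^t *\<^sub>R m t)"
  have "(\<lambda>t. \<gamma>^t *\<^sub>R m t) sums S"
    using summable_norm_cancel[OF norms] by (simp add: S_def summable_sums)
  then have "(\<lambda>t. \<gamma>^Suc t *\<^sub>R m (Suc t)) sums (S - m 0)"
    by (subst sums_Suc_iff) simp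
  moreover have "(\<lambda>t. \<gamma>^Suc t *\<^sub>R m (Suc t)) sums (\<gamma> *\<^sub>R (N ** S ** transpose N) + (\<gamma> / (1 - \<gamma>)) *\<^sub>R W)"
  proof -
    have "(\<lambda>t. \<gamma> *\<^sub>R (N ** (\<gamma>^t *\<^sub>R m t) ** transpose N)) sums (\<gamma> *\<^sub>R (N ** S ** transpose N))"
      by (intro bounded_linear.sums[OF bounded_linear_compose[OF bounded_linear_scaleR_right
            bounded_linear_matrix_sandwich]] \<open>_ sums S\<close>)
    moreover have "(\<lambda>t. \<gamma>^Suc t *\<^sub>R W) sums ((\<gamma> / (1 - \<gamma>)) *\<^sub>R W)"
      using geometric_sums[of \<gamma>] assms(2,3)
      by (intro sums_scaleR_left) (auto dest: sums_mult[where c=\<gamma>] simp: divide_simps)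
    ultimately have "(\<lambda>t. \<gamma> *\<^sub>R (N ** (\<gamma>^t *\<^sub>R m t) ** transpose N) + \<gamma>^Suc t *\<^sub>R W)
        sums (\<gamma> *\<^sub>R (N ** S ** transpose N) + (\<gamma> / (1 - \<gamma>)) *\<^sub>R W)"
      by (rule sums_add)
    moreover have "(\<lambda>t. \<gamma>^Suc t *\<^sub>R m (Suc t))
        = (\<lambda>t. \<gamma> *\<^sub>R (N ** (\<gamma>^t *\<^sub>R m t) ** transpose N) + \<gamma>^Suc t *\<^sub>R W)"
      by (simp add: fun_eq_iff m matrix_algebra_simps scaleR_add_right)
    ultimately show ?thesis by simp
  qed
  ultimately have "S - m 0 = \<gamma> *\<^sub>R (N ** S ** transpose N) + (\<gamma> / (1 - \<gamma>)) *\<^sub>R W"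
    by (rule sums_unique2)
  then have "S = m 0 + (\<gamma> / (1 - \<gamma>)) *\<^sub>R W + \<gamma> *\<^sub>R (N ** S ** transpose N)"
    by (metis add.assoc add.commute diff_eq_eq)
  then show "(\<Sum>t. \<gamma>^t *\<^sub>R m t) = discrete_lyapunov \<gamma> N (m 0 + (\<gamma> / (1 - \<gamma>)) *\<^sub>R W)"
    unfolding S_def by (rule discrete_lyapunov_unique[OF assms(2,4), THEN iffD1])
qed

section \<open>Differentiating a Lyapunov cost\<close>

lemma has_real_derivative_of_eventually_factor:
  fixes f h :: "real \<Rightarrow> real"
  assumes "\<forall>\<^sub>F s in at 0. f s - f 0 = s * h s" "isCont h 0"
  shows "(f has_real_derivative h 0) (at 0)"
proof -
  have "((\<lambda>s. f 0 + s * h s) has_real_derivative h 0) (at 0)"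
    using assms(2) by (subst CARAT_DERIV) (auto intro!: exI[of _ h])
  moreover have "\<forall>\<^sub>F s in at 0. f 0 + s * h s = f s"
    using assms(1) by eventually_elim simp
  ultimately show ?thesis
    using has_field_derivative_cong_eventually[of "\<lambda>s. f 0 + s * h s" f 0 UNIV] by simp
qed

lemma quadratic_cost_increment:
  fixes A P S :: "real^'d^'d" and B :: "real^'l^'d" and K U :: "real^'d^'l" and R :: "real^'l^'l"
    and \<gamma> :: real
  assumes "transpose R = R" "transpose P = P"
  defines "E \<equiv> R ** K + \<gamma> *\<^sub>R (transpose B ** P ** (A + B ** K))"
  shows "(S + transpose (K + s *\<^sub>R U) ** R ** (K + s *\<^sub>R U)) - (S + transpose K ** R ** K)
      + \<gamma> *\<^sub>R (transpose (A + B ** (K + s *\<^sub>R U)) ** P ** (A + B ** (K + s *\<^sub>R U))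
               - transpose (A + B ** K) ** P ** (A + B ** K))
    = s *\<^sub>R (transpose U ** E + transpose E ** U)
      + s^2 *\<^sub>R (transpose U ** (R + \<gamma> *\<^sub>R (transpose B ** P ** B)) ** U)"
  by (simp add: E_def matrix_algebra_simps assms algebra_simps power2_eq_square)

lemma trace_lyapunov_cost_increment:
  fixes A P S W X :: "real^'d^'d" and B :: "real^'l^'d" and K U :: "real^'d^'l" and R :: "real^'l^'l"
    and \<gamma> :: real
  assumes "transpose R = R" "transpose P = P"
    and X: "X = W + \<gamma> *\<^sub>R ((A + B ** (K + s *\<^sub>R U)) ** X ** transpose (A + B ** (K + s *\<^sub>R U)))"
    and P: "P = (S + transpose K ** R ** K) + \<gamma> *\<^sub>R (transpose (A + B ** K) ** P ** (A + B ** K))"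
  defines "E \<equiv> R ** K + \<gamma> *\<^sub>R (transpose B ** P ** (A + B ** K))"
  shows "trace ((S + transpose (K + s *\<^sub>R U) ** R ** (K + s *\<^sub>R U)) ** X) - trace (P ** W)
    = s * trace ((transpose U ** E + transpose E ** U
                  + s *\<^sub>R (transpose U ** (R + \<gamma> *\<^sub>R (transpose B ** P ** B)) ** U)) ** X)"
proof -
  have "trace ((S + transpose (K + s *\<^sub>R U) ** R ** (K + s *\<^sub>R U)) ** X) - trace (P ** W)
    = trace ((s *\<^sub>R (transpose U ** E + transpose E ** U)
              + s^2 *\<^sub>R (transpose U ** (R + \<gamma> *\<^sub>R (transpose B ** P ** B)) ** U)) ** X)"
    unfolding trace_lyapunov_difference[OF X P] E_def quadratic_cost_increment[OF assms(1,2)] ..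
  then show ?thesis
    by (simp add: matrix_algebra_simps trace_add trace_scaleR power2_eq_square distrib_left)
qed

lemma has_real_derivative_lyapunov_cost:
  fixes A S W :: "real^'d^'d" and B :: "real^'l^'d" and K U :: "real^'d^'l" and R :: "real^'l^'l"
    and \<gamma> :: real
  assumes "0 \<le> \<gamma>" "\<gamma> * (opnorm (A + B ** K))^2 < 1" "transpose R = R" "transpose S = S"
  defines "E \<equiv> R ** K + \<gamma> *\<^sub>R (transpose B
      ** discrete_lyapunov \<gamma> (transpose (A + B ** K)) (S + transpose K ** R ** K) ** (A + B ** K))"
  shows "((\<lambda>s. trace ((S + transpose (K + s *\<^sub>R U) ** R ** (K + s *\<^sub>R U))
                  ** discrete_lyapunov \<gamma> (A + B ** (K + s *\<^sub>R U)) W))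
      has_real_derivative trace ((transpose U ** E + transpose E ** U) ** discrete_lyapunov \<gamma> (A + B ** K) W)) (at 0)"
proof -
  define P where "P = discrete_lyapunov \<gamma> (transpose (A + B ** K)) (S + transpose K ** R ** K)"
  define G where "G = transpose U ** (R + \<gamma> *\<^sub>R (transpose B ** P ** B)) ** U"
  define N where "N s = A + B ** (K + s *\<^sub>R U)" for s
  define X where "X s = discrete_lyapunov \<gamma> (N s) W" for s
  define J where "J = (\<lambda>s. trace ((S + transpose (K + s *\<^sub>R U) ** R ** (K + s *\<^sub>R U)) ** X s))"
  define h where "h s = trace ((transpose U ** E + transpose E ** U + s *\<^sub>R G) ** X s)" for s
  have N_tendsto: "(N \<longlongrightarrow> N 0) (at 0)"
    unfolding N_def by (auto intro!: tendsto_eq_intros)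
  have stable0: "\<gamma> * (opnorm (N 0))^2 < 1"
    using assms(2) by (simp add: N_def)
  have P_eq: "P = (S + transpose K ** R ** K) + \<gamma> *\<^sub>R (transpose (A + B ** K) ** P ** (A + B ** K))"
    using discrete_lyapunov_eq[OF assms(1), of "transpose (A + B ** K)" "S + transpose K ** R ** K"] assms(2)
    by (simp add: P_def opnorm_transpose)
  have "transpose (S + transpose K ** R ** K) = S + transpose K ** R ** K"
    by (simp add: matrix_algebra_simps assms(3,4))
  then have P_sym: "transpose P = P"
    unfolding P_def using assms(2)
    by (intro discrete_lyapunov_symmetric[OF assms(1)]) (simp_all add: opnorm_transpose)
  have E_eq: "E = R ** K + \<gamma> *\<^sub>R (transpose B ** P ** (A + B ** K))"
    by (simp add: E_def P_def)
  have increment: "J s - trace (P ** W) = s * h s" if "\<gamma> * (opnorm (N s))^2 < 1" for s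
  proof -
    have "X s = W + \<gamma> *\<^sub>R (N s ** X s ** transpose (N s))"
      unfolding X_def by (rule discrete_lyapunov_eq[OF assms(1) that])
    then show ?thesis
      unfolding J_def h_def G_def E_eq N_def by (rule trace_lyapunov_cost_increment[OF assms(3) P_sym _ P_eq])
  qed
  have "(X \<longlongrightarrow> X 0) (at 0)"
    unfolding X_def by (rule discrete_lyapunov_tendsto[OF assms(1) stable0 N_tendsto])
  then have continuous: "isCont h 0"
    unfolding isCont_def h_def by (intro tendsto_intros)
  have J0: "J 0 = trace (P ** W)"
    using increment[OF stable0] by simp
  have "\<forall>\<^sub>F s in at 0. J s - J 0 = s * h s"
    using eventually_scaled_opnorm_less[OF N_tendsto stable0] by eventually_elim (simp add: J0 increment)
  then have "(J has_real_derivative h 0) (at 0)"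
    using continuous by (rule has_real_derivative_of_eventually_factor)
  then show ?thesis
    by (simp add: J_def h_def X_def N_def)
qed

lemma trace_transpose_munit_mult: "trace (transpose (munit i k) ** (Y::real^'d^'l)) = Y $ i $ k"
proof -
  have "trace (transpose (munit i k) ** Y) = (\<Sum>a\<in>UNIV. \<Sum>b\<in>UNIV. if b = i \<and> a = k then Y $ i $ k else 0)"
    by (simp add: trace_def matrix_matrix_mult_def transpose_def munit_def if_distrib if_distribR cong: if_cong)
  also have "\<dots> = (\<Sum>a\<in>UNIV. if a = k then Y $ i $ k else 0)"
    by (intro sum.cong refl) simp
  finally show ?thesis by simp
qed

lemma trace_munit_symmetric:
  fixes E :: "real^'d^'l" and X :: "real^'d^'d"
  assumes "transpose X = X"
  shows "trace ((transpose (munit i k) ** E + transpose E ** munit i k) ** X) = 2 * (E ** X) $ i $ k"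
proof -
  have "trace (transpose E ** munit i k ** X) = trace (transpose (transpose E ** munit i k ** X))"
    by (rule trace_transpose[symmetric])
  also have "\<dots> = trace (transpose (munit i k) ** (E ** X))"
    by (metis assms matrix_mul_assoc matrix_transpose_mul trace_mul_sym transpose_transpose)
  finally show ?thesis
    by (simp add: matrix_add_rdistrib trace_add trace_transpose_munit_mult flip: matrix_mul_assoc)
qed

lemma is_matrix_gradient_lyapunov_cost:
  fixes A S W :: "real^'d^'d" and B :: "real^'l^'d" and K :: "real^'d^'l" and R :: "real^'l^'l"
    and \<gamma> :: real
  assumes "0 \<le> \<gamma>" "\<gamma> * (opnorm (A + B ** K))^2 < 1"
    and "transpose R = R" "transpose S = S" "transpose W = W"
  shows "is_matrix_gradient (\<lambda>K. trace ((S + transpose K ** R ** K) ** discrete_lyapunov \<gamma> (A + B ** K) W)) K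
    (2 *\<^sub>R ((R ** K + \<gamma> *\<^sub>R (transpose B ** discrete_lyapunov \<gamma> (transpose (A + B ** K)) (S + transpose K ** R ** K)
                 ** (A + B ** K))) ** discrete_lyapunov \<gamma> (A + B ** K) W))"
  unfolding is_matrix_gradient_def
proof (intro allI)
  fix i k
  show "((\<lambda>s. trace ((S + transpose (K + s *\<^sub>R munit i k) ** R ** (K + s *\<^sub>R munit i k))
      ** discrete_lyapunov \<gamma> (A + B ** (K + s *\<^sub>R munit i k)) W)) has_real_derivative
    (2 *\<^sub>R ((R ** K + \<gamma> *\<^sub>R (transpose B ** discrete_lyapunov \<gamma> (transpose (A + B ** K)) (S + transpose K ** R ** K)
                 ** (A + B ** K))) ** discrete_lyapunov \<gamma> (A + B ** K) W)) $ i $ k) (at 0)"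
    using has_real_derivative_lyapunov_cost[OF assms(1-4), of "munit i k" W]
    unfolding trace_munit_symmetric[OF discrete_lyapunov_symmetric[OF assms(1,2,5)]] by simp
qed

lemma is_matrix_gradient_cong_eventually:
  assumes "\<forall>\<^sub>F K' in nhds K. f K' = g K'" "is_matrix_gradient f K G"
  shows "is_matrix_gradient g K G"
  unfolding is_matrix_gradient_def
proof (intro allI)
  fix i k
  have "((\<lambda>s. K + s *\<^sub>R munit i k) \<longlongrightarrow> K) (at 0)"
    by (auto intro!: tendsto_eq_intros)
  then have "\<forall>\<^sub>F s in at 0. f (K + s *\<^sub>R munit i k) = g (K + s *\<^sub>R munit i k)"
    by (rule eventually_compose_filterlim[OF assms(1)])
  moreover have "f (K + 0 *\<^sub>R munit i k) = g (K + 0 *\<^sub>R munit i k)"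
    using eventually_nhds_x_imp_x[OF assms(1)] by simp
  ultimately have "((\<lambda>s. f (K + s *\<^sub>R munit i k)) has_real_derivative G $ i $ k) (at 0)
      \<longleftrightarrow> ((\<lambda>s. g (K + s *\<^sub>R munit i k)) has_real_derivative G $ i $ k) (at 0)"
    by (rule has_field_derivative_cong_eventually)
  then show "((\<lambda>s. g (K + s *\<^sub>R munit i k)) has_real_derivative G $ i $ k) (at 0)"
    using assms(2) unfolding is_matrix_gradient_def by blast
qed

lemma is_matrix_gradient_add_const:
  "is_matrix_gradient f K G \<Longrightarrow> is_matrix_gradient (\<lambda>K. f K + c) K G"
  "is_matrix_gradient f K G \<Longrightarrow> is_matrix_gradient (\<lambda>K. c + f K) K G"
  unfolding is_matrix_gradient_def
  by (auto intro: DERIV_add[OF _ DERIV_const, simplified] DERIV_add[OF DERIV_const, simplified])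

section \<open>Second moments of random vectors\<close>

definition outer_prod :: "real^'n \<Rightarrow> real^'m \<Rightarrow> real^'m^'n" where
  "outer_prod x y = (\<chi> i j. x $ i * y $ j)"

definition sq_integrable :: "'a measure \<Rightarrow> ('a \<Rightarrow> real^'n) \<Rightarrow> bool" where
  "sq_integrable M X \<longleftrightarrow> X \<in> borel_measurable M \<and> integrable M (\<lambda>\<omega>. (norm (X \<omega>))^2)"

definition cross_moment :: "'a measure \<Rightarrow> ('a \<Rightarrow> real^'n) \<Rightarrow> ('a \<Rightarrow> real^'m) \<Rightarrow> real^'m^'n" where
  "cross_moment M X Y = (\<integral>\<omega>. outer_prod (X \<omega>) (Y \<omega>) \<partial>M)"

definition second_moment :: "'a measure \<Rightarrow> ('a \<Rightarrow> real^'n) \<Rightarrow> real^'n^'n" where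
  "second_moment M X = (\<integral>\<omega>. outer (X \<omega>) \<partial>M)"

lemma continuous_on_outer: "continuous_on UNIV outer"
  unfolding outer_def by (intro continuous_intros)

lemma outer_eq_outer_prod: "outer x = outer_prod x x"
  by (simp add: outer_def outer_prod_def)

lemma outer_prod_matrix_vector_mult: "outer_prod (N *v x) y = N ** outer_prod x y"
  by (simp add: outer_prod_def vec_eq_iff matrix_matrix_mult_def matrix_vector_mult_def sum_distrib_left sum_distrib_right mult_ac)

lemma outer_prod_add_left: "outer_prod (x + z) y = outer_prod x y + outer_prod z y"
  by (simp add: outer_prod_def vec_eq_iff algebra_simps)

lemma outer_prod_add_right: "outer_prod x (y + z) = outer_prod x y + outer_prod x z"
  by (simp add: outer_prod_def vec_eq_iff algebra_simps)

lemma transpose_outer_prod: "transpose (outer_prod x y) = outer_prod y x"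
  by (simp add: outer_prod_def transpose_def vec_eq_iff mult.commute)

lemma outer_affine:
  "outer (N *v x + y) = N ** outer x ** transpose N + (N ** outer_prod x y + transpose (N ** outer_prod x y)) + outer y"
proof -
  have "outer_prod (N *v x) (N *v x) = N ** outer x ** transpose N"
    by (metis outer_eq_outer_prod outer_prod_matrix_vector_mult transpose_outer_prod matrix_transpose_mul transpose_transpose)
  moreover have "outer_prod y (N *v x) = transpose (N ** outer_prod x y)"
    by (simp add: transpose_outer_prod flip: outer_prod_matrix_vector_mult)
  ultimately show ?thesis
    by (simp add: outer_eq_outer_prod outer_prod_add_left outer_prod_add_right outer_prod_matrix_vector_mult)
qed

lemma norm_outer_prod: "norm (outer_prod x y) = norm x * norm y"
proof -
  have "outer_prod x y $ i = (x $ i) *\<^sub>R y" for i by (simp add: outer_prod_def vec_eq_iff)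
  then have "(norm (outer_prod x y))^2 = (norm x * norm y)^2"
    by (simp add: norm_matrix_sq_rows norm_vec_sq[of x] power_mult_distrib sum_distrib_right)
  then show ?thesis by (simp add: power2_eq_iff_nonneg)
qed

lemma trace_outer: "trace (outer x) = (norm x)^2"
  unfolding norm_vec_sq by (simp add: trace_def outer_def power2_eq_square)

lemma stage_cost_eq_trace:
  "stage_cost Q R1 R2 K1 K2 x = trace ((Q + transpose K1 ** R1 ** K1 - transpose K2 ** R2 ** K2) ** outer x)"
proof -
  have quadratic_form: "x \<bullet> (S *v x) = trace (S ** outer x)" for S :: "real^'n^'n" and x
    by (simp add: trace_def matrix_matrix_mult_def outer_def inner_vec_def matrix_vector_mult_def
        sum_distrib_left mult_ac)
  have adjoint: "(K *v y) \<bullet> z = y \<bullet> (transpose K *v z)" for K :: "real^'n^'m" and y z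
    by (metis dot_lmul_matrix inner_commute transpose_matrix_vector)
  have quadratic: "(K *v y) \<bullet> (R *v (K *v y)) = y \<bullet> ((transpose K ** R ** K) *v y)"
    for K :: "real^'n^'m" and R y
    by (simp only: adjoint matrix_vector_mul_assoc matrix_mul_assoc)
  have "stage_cost Q R1 R2 K1 K2 x = x \<bullet> ((Q + transpose K1 ** R1 ** K1 - transpose K2 ** R2 ** K2) *v x)"
    unfolding stage_cost_def quadratic
    by (simp only: matrix_vector_mult_add_rdistrib matrix_vector_mult_diff_rdistrib inner_add_right inner_diff_right)
  then show ?thesis by (simp only: quadratic_form)
qed

lemma borel_measurable_outer_prod [measurable]:
  fixes X :: "'a \<Rightarrow> real^'n" and Y :: "'a \<Rightarrow> real^'m"
  assumes "X \<in> borel_measurable M" "Y \<in> borel_measurable M"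
  shows "(\<lambda>\<omega>. outer_prod (X \<omega>) (Y \<omega>)) \<in> borel_measurable M"
  using assms by (rule borel_measurable_continuous_Pair) (simp add: outer_prod_def continuous_intros)

lemma integrable_outer_prod:
  assumes "sq_integrable M X" "sq_integrable M Y"
  shows "integrable M (\<lambda>\<omega>. outer_prod (X \<omega>) (Y \<omega>))"
proof (rule Bochner_Integration.integrable_bound)
  show "integrable M (\<lambda>\<omega>. (norm (X \<omega>))^2 + (norm (Y \<omega>))^2)"
    using assms unfolding sq_integrable_def by auto
  have "norm x * norm y \<le> (norm x)^2 + (norm y)^2" for x :: "real^'n" and y :: "real^'m"
    using sum_squares_bound[of "norm x" "norm y"] mult_nonneg_nonneg[OF norm_ge_zero norm_ge_zero, of x y]
    by linarith
  then show "AE \<omega> in M. norm (outer_prod (X \<omega>) (Y \<omega>)) \<le> norm ((norm (X \<omega>))^2 + (norm (Y \<omega>))^2)"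
    by (auto simp: norm_outer_prod)
qed (use assms in \<open>auto simp: sq_integrable_def\<close>)

lemma cross_moment_nth:
  assumes "sq_integrable M X" "sq_integrable M Y"
  shows "cross_moment M X Y $ i $ j = (\<integral>\<omega>. X \<omega> $ i * Y \<omega> $ j \<partial>M)"
  using integral_bounded_linear[OF bounded_linear_compose[OF bounded_linear_vec_nth bounded_linear_vec_nth]
      integrable_outer_prod[OF assms]]
  by (simp add: cross_moment_def outer_prod_def)

lemma second_moment_eq_cross_moment: "second_moment M X = cross_moment M X X"
  by (simp add: second_moment_def cross_moment_def outer_eq_outer_prod)

lemma symmetric_second_moment:
  assumes "sq_integrable M X"
  shows "transpose (second_moment M X) = second_moment M X"
  using integral_bounded_linear[OF bounded_linear_transpose integrable_outer_prod[OF assms assms]]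
  by (simp add: second_moment_eq_cross_moment cross_moment_def transpose_outer_prod)

lemma integral_norm_outer:
  fixes X :: "'a \<Rightarrow> real^'n"
  assumes "sq_integrable M X"
  shows "(\<integral>\<omega>. norm (outer (X \<omega>)) \<partial>M) = trace (second_moment M X)"
proof -
  have int: "integrable M (\<lambda>\<omega>. outer (X \<omega>))"
    using assms by (simp add: outer_eq_outer_prod integrable_outer_prod)
  have "norm (outer x) = trace (outer x)" for x :: "real^'n"
    unfolding trace_outer by (simp add: outer_eq_outer_prod norm_outer_prod power2_eq_square)
  then have "(\<integral>\<omega>. norm (outer (X \<omega>)) \<partial>M) = (\<integral>\<omega>. trace (outer (X \<omega>)) \<partial>M)"
    by simp
  also have "\<dots> = trace (second_moment M X)"
    unfolding second_moment_def by (rule integral_bounded_linear[OF bounded_linear_trace int])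
  finally show ?thesis .
qed

context prob_space
begin

lemma sq_integrable_integrable:
  assumes "sq_integrable M X"
  shows "integrable M X"
proof -
  have meas: "X \<in> borel_measurable M" using assms by (simp add: sq_integrable_def)
  have "integrable M (\<lambda>\<omega>. norm (X \<omega>))"
  proof (rule square_integrable_imp_integrable)
    show "(\<lambda>\<omega>. norm (X \<omega>)) \<in> borel_measurable M" using meas by simp
    show "integrable M (\<lambda>\<omega>. (norm (X \<omega>))^2)" using assms by (simp add: sq_integrable_def)
  qed
  then show ?thesis using meas by (simp add: integrable_norm_iff)
qed

lemma sq_integrable_const: "sq_integrable M (\<lambda>_. c)"
  by (simp add: sq_integrable_def)

lemma sq_integrable_affine:
  fixes X :: "'a \<Rightarrow> real^'n" and Y :: "'a \<Rightarrow> real^'m" and N :: "real^'n^'m"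
  assumes "sq_integrable M X" "sq_integrable M Y"
  shows "sq_integrable M (\<lambda>\<omega>. N *v X \<omega> + Y \<omega>)"
  unfolding sq_integrable_def
proof
  show meas: "(\<lambda>\<omega>. N *v X \<omega> + Y \<omega>) \<in> borel_measurable M"
    using assms unfolding sq_integrable_def
    by (intro borel_measurable_add borel_measurable_continuous_on[where f="(*v) N"]
        linear_continuous_on matrix_vector_mul_bounded_linear) auto
  have bound: "(norm (N *v x + y))^2 \<le> 2 * (opnorm N)^2 * (norm x)^2 + 2 * (norm y)^2" for x y
  proof -
    have "norm (N *v x + y) \<le> opnorm N * norm x + norm y"
      using norm_triangle_ineq[of "N *v x" y] norm_matrix_vector_mult_le[of N x] by simp
    then have "(norm (N *v x + y))^2 \<le> (opnorm N * norm x + norm y)^2"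
      by (rule power_mono) simp
    also have "\<dots> \<le> 2 * (opnorm N * norm x)^2 + 2 * (norm y)^2"
      using sum_squares_bound[of "opnorm N * norm x" "norm y"] by (simp add: power2_sum)
    finally show ?thesis by (simp add: power_mult_distrib)
  qed
  show "integrable M (\<lambda>\<omega>. (norm (N *v X \<omega> + Y \<omega>))^2)"
  proof (rule Bochner_Integration.integrable_bound[where f="\<lambda>\<omega>. 2 * (opnorm N)^2 * (norm (X \<omega>))^2 + 2 * (norm (Y \<omega>))^2"])
    show "integrable M (\<lambda>\<omega>. 2 * (opnorm N)^2 * (norm (X \<omega>))^2 + 2 * (norm (Y \<omega>))^2)"
      using assms unfolding sq_integrable_def by simp
  qed (use meas bound in \<open>auto intro!: AE_I2\<close>)
qed

lemma cross_moment_affine: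
  fixes X :: "'a \<Rightarrow> real^'n" and Z :: "'a \<Rightarrow> real^'m" and Y :: "'a \<Rightarrow> real^'k" and N :: "real^'n^'m"
  assumes "sq_integrable M X" "sq_integrable M Z" "sq_integrable M Y"
  shows "cross_moment M (\<lambda>\<omega>. N *v X \<omega> + Z \<omega>) Y = N ** cross_moment M X Y + cross_moment M Z Y"
proof -
  note int = integrable_outer_prod[OF assms(1,3)] integrable_outer_prod[OF assms(2,3)]
  note mult = bounded_linear_matrix_mult_left[of N]
  have "cross_moment M (\<lambda>\<omega>. N *v X \<omega> + Z \<omega>) Y
      = (\<integral>\<omega>. N ** outer_prod (X \<omega>) (Y \<omega>) + outer_prod (Z \<omega>) (Y \<omega>) \<partial>M)"
    by (simp add: cross_moment_def outer_prod_add_left outer_prod_matrix_vector_mult)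
  also have "\<dots> = N ** cross_moment M X Y + cross_moment M Z Y"
    using integrable_bounded_linear[OF mult int(1)] int(2)
    by (simp add: cross_moment_def integral_bounded_linear[OF mult int(1)])
  finally show ?thesis .
qed

lemma second_moment_affine:
  fixes X :: "'a \<Rightarrow> real^'n" and Y :: "'a \<Rightarrow> real^'m" and N :: "real^'n^'m"
  assumes "sq_integrable M X" "sq_integrable M Y" "cross_moment M X Y = 0"
  shows "second_moment M (\<lambda>\<omega>. N *v X \<omega> + Y \<omega>) = N ** second_moment M X ** transpose N + second_moment M Y"
proof -
  have int: "integrable M (\<lambda>\<omega>. outer (X \<omega>))" "integrable M (\<lambda>\<omega>. outer (Y \<omega>))"
    and int_cross: "integrable M (\<lambda>\<omega>. outer_prod (X \<omega>) (Y \<omega>))"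
    using assms by (simp_all add: outer_eq_outer_prod integrable_outer_prod)
  note sandwich = bounded_linear_matrix_sandwich[of N "transpose N"]
    and mult = bounded_linear_matrix_mult_left[of N]
  note mult_transpose = bounded_linear_compose[OF bounded_linear_transpose mult]
  have cross: "(\<integral>\<omega>. N ** outer_prod (X \<omega>) (Y \<omega>) + transpose (N ** outer_prod (X \<omega>) (Y \<omega>)) \<partial>M) = 0"
    using integrable_bounded_linear[OF mult int_cross] integrable_bounded_linear[OF mult_transpose int_cross]
      assms(3)
    by (simp add: integral_bounded_linear[OF mult int_cross] integral_bounded_linear[OF mult_transpose int_cross]
        cross_moment_def)
  have "second_moment M (\<lambda>\<omega>. N *v X \<omega> + Y \<omega>)
      = (\<integral>\<omega>. N ** outer (X \<omega>) ** transpose N \<partial>M)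
        + (\<integral>\<omega>. N ** outer_prod (X \<omega>) (Y \<omega>) + transpose (N ** outer_prod (X \<omega>) (Y \<omega>)) \<partial>M)
        + second_moment M Y"
    unfolding second_moment_def outer_affine
    using integrable_bounded_linear[OF sandwich int(1)] integrable_bounded_linear[OF mult int_cross]
      integrable_bounded_linear[OF mult_transpose int_cross] int(2)
    by simp
  then show ?thesis
    by (simp add: cross second_moment_def integral_bounded_linear[OF sandwich int(1)])
qed

lemma cross_moment_indep:
  assumes "indep_var borel X borel Y" "sq_integrable M X" "sq_integrable M Y" "(\<integral>\<omega>. Y \<omega> \<partial>M) = 0"
  shows "cross_moment M X Y = 0"
proof -
  have "cross_moment M X Y $ i $ j = 0" for i j
  proof -
    have "indep_var borel ((\<lambda>v. v $ i) \<circ> X) borel ((\<lambda>v. v $ j) \<circ> Y)"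
      by (rule indep_var_compose[OF assms(1)]) simp_all
    then have "(\<integral>\<omega>. X \<omega> $ i * Y \<omega> $ j \<partial>M) = (\<integral>\<omega>. X \<omega> $ i \<partial>M) * (\<integral>\<omega>. Y \<omega> $ j \<partial>M)"
      using assms(2,3) by (intro indep_var_lebesgue_integral[unfolded comp_def])
        (auto simp: comp_def intro!: integrable_bounded_linear[OF bounded_linear_vec_nth] sq_integrable_integrable)
    also have "(\<integral>\<omega>. Y \<omega> $ j \<partial>M) = 0"
      using integral_bounded_linear[OF bounded_linear_vec_nth sq_integrable_integrable[OF assms(3)]] assms(4)
      by simp
    finally show ?thesis by (simp add: cross_moment_nth assms)
  qed
  then show ?thesis by (simp add: vec_eq_iff)
qed

lemma cross_moment_const:
  assumes "sq_integrable M Y" "(\<integral>\<omega>. Y \<omega> \<partial>M) = 0"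
  shows "cross_moment M (\<lambda>_. c) Y = 0"
proof -
  have "cross_moment M (\<lambda>_. c) Y $ i $ j = c $ i * (\<integral>\<omega>. Y \<omega> \<partial>M) $ j" for i j
    using integral_bounded_linear[OF bounded_linear_vec_nth sq_integrable_integrable[OF assms(1)]]
    by (simp add: cross_moment_nth assms sq_integrable_const)
  then show ?thesis by (simp add: vec_eq_iff assms(2))
qed

lemma second_moment_const: "second_moment M (\<lambda>_. c) = outer c"
  by (simp add: second_moment_def prob_space)

lemma second_moment_distr_eq:
  assumes "distr M borel X = distr M borel Y" "X \<in> borel_measurable M" "Y \<in> borel_measurable M"
  shows "second_moment M X = second_moment M Y"
proof -
  have outer_meas: "outer \<in> borel_measurable borel"
    by (rule borel_measurable_continuous_onI[OF continuous_on_outer])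
  show ?thesis
    unfolding second_moment_def
    using integral_distr[OF assms(2) outer_meas] integral_distr[OF assms(3) outer_meas] assms(1) by simp
qed

end

section \<open>Discounted second moments of the state process\<close>

lemma AE_summable_norm_of_summable_integral:
  fixes f :: "nat \<Rightarrow> 'a \<Rightarrow> 'b::{banach, second_countable_topology}"
  assumes int: "\<And>i. integrable M (f i)" and s: "summable (\<lambda>i. \<integral>x. norm (f i x) \<partial>M)"
  shows "AE x in M. summable (\<lambda>i. norm (f i x))"
proof -
  have meas: "\<And>i. (\<lambda>x. ennreal (norm (f i x))) \<in> borel_measurable M"
    using int by measurable
  have "(\<integral>\<^sup>+x. (\<Sum>i. ennreal (norm (f i x))) \<partial>M) = (\<Sum>i. ennreal (\<integral>x. norm (f i x) \<partial>M))"
    by (simp add: nn_integral_suminf[OF meas] nn_integral_eq_integral int)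
  also have "\<dots> = ennreal (\<Sum>i. \<integral>x. norm (f i x) \<partial>M)"
    by (rule suminf_ennreal2[OF _ s]) simp
  finally have "(\<integral>\<^sup>+x. (\<Sum>i. ennreal (norm (f i x))) \<partial>M) < \<infinity>" by simp
  then have "AE x in M. (\<Sum>i. ennreal (norm (f i x))) < \<infinity>"
    by (intro finite_nn_integral_imp_ae_finite) (use meas in measurable)
  then show ?thesis
    by eventually_elim (auto intro: summable_suminf_not_top)
qed

lemma integral_suminf_bounded_linear:
  fixes F :: "nat \<Rightarrow> 'a \<Rightarrow> 'b::{banach, second_countable_topology}"
    and T :: "'b \<Rightarrow> 'c::{banach, second_countable_topology}"
  assumes T: "bounded_linear T" and int: "\<And>t. integrable M (F t)"
    and s: "summable (\<lambda>t. \<integral>\<omega>. norm (F t \<omega>) \<partial>M)"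
  shows "(\<integral>\<omega>. (\<Sum>t. T (F t \<omega>)) \<partial>M) = T (\<Sum>t. \<integral>\<omega>. F t \<omega> \<partial>M)"
proof -
  obtain c where c: "\<And>x. norm (T x) \<le> norm x * c" "c > 0"
    using bounded_linear.pos_bounded[OF T] by blast
  have int': "\<And>t. integrable M (\<lambda>\<omega>. T (F t \<omega>))"
    by (rule integrable_bounded_linear[OF T int])
  have "AE \<omega> in M. summable (\<lambda>t. norm (T (F t \<omega>)))"
    using AE_summable_norm_of_summable_integral[OF int s]
  proof eventually_elim
    case (elim \<omega>)
    show ?case
      by (rule summable_comparison_test'[OF summable_mult2[OF elim, of c]]) (simp add: c(1))
  qed
  moreover have "summable (\<lambda>t. \<integral>\<omega>. norm (T (F t \<omega>)) \<partial>M)"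
  proof (rule summable_comparison_test'[OF summable_mult2[OF s, of c]])
    fix t
    have "(\<integral>\<omega>. norm (T (F t \<omega>)) \<partial>M) \<le> (\<integral>\<omega>. norm (F t \<omega>) * c \<partial>M)"
      using int int' c by (intro integral_mono) auto
    then show "norm (\<integral>\<omega>. norm (T (F t \<omega>)) \<partial>M) \<le> (\<integral>\<omega>. norm (F t \<omega>) \<partial>M) * c"
      by simp
  qed
  ultimately have "(\<integral>\<omega>. (\<Sum>t. T (F t \<omega>)) \<partial>M) = (\<Sum>t. T (\<integral>\<omega>. F t \<omega> \<partial>M))"
    using int' by (simp add: integral_suminf integral_bounded_linear[OF T int])
  also have "\<dots> = T (\<Sum>t. \<integral>\<omega>. F t \<omega> \<partial>M)"
    using summable_integral[OF int AE_summable_norm_of_summable_integral[OF int s] s]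
    by (rule bounded_linear.suminf[OF T, symmetric])
  finally show ?thesis .
qed

lemma (in prob_space) indep_var_of_indep_vars:
  assumes "indep_vars (\<lambda>_. borel) X I" "a \<in> I" "b \<in> I" "a \<noteq> b"
  shows "indep_var borel (X a) borel (X b)"
proof -
  have "indep_var (PiM {a} (\<lambda>_. borel)) (\<lambda>\<omega>. restrict (\<lambda>i. X i \<omega>) {a})
                  (PiM {b} (\<lambda>_. borel)) (\<lambda>\<omega>. restrict (\<lambda>i. X i \<omega>) {b})"
    using assms by (intro indep_var_restrict) auto
  then have "indep_var borel ((\<lambda>f. f a) \<circ> (\<lambda>\<omega>. restrict (\<lambda>i. X i \<omega>) {a}))
                       borel ((\<lambda>f. f b) \<circ> (\<lambda>\<omega>. restrict (\<lambda>i. X i \<omega>) {b}))"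
    by (rule indep_var_compose) (auto intro: measurable_component_singleton)
  then show ?thesis by (simp add: comp_def)
qed

locale driving_noise = prob_space +
  fixes eps :: "nat \<Rightarrow> 'a \<Rightarrow> real^'d"
  assumes sq_integrable_noise: "sq_integrable M (eps t)"
    and distr_noise: "1 \<le> t \<Longrightarrow> distr M borel (eps t) = distr M borel (eps 1)"
    and mean_noise: "1 \<le> t \<Longrightarrow> (\<integral>\<omega>. eps t \<omega> \<partial>M) = 0"
    and indep_noise: "s \<noteq> t \<Longrightarrow> indep_var borel (eps s) borel (eps t)"
begin

definition noise_forcing :: "real \<Rightarrow> real^'d^'d" where
  "noise_forcing \<gamma> = second_moment M (eps 0) + (\<gamma> / (1 - \<gamma>)) *\<^sub>R second_moment M (eps 1)"

lemma symmetric_noise_forcing: "transpose (noise_forcing \<gamma>) = noise_forcing \<gamma>"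
  by (simp add: noise_forcing_def transpose_add transpose_scalar symmetric_second_moment sq_integrable_noise)

lemma traj_sq_integrable_uncorrelated:
  assumes "sq_integrable M x0" "\<And>r. 1 \<le> r \<Longrightarrow> cross_moment M x0 (eps r) = 0"
  shows "sq_integrable M (traj N eps x0 t) \<and> (\<forall>r>t. cross_moment M (traj N eps x0 t) (eps r) = 0)"
proof (induction t)
  case (Suc t)
  then have "cross_moment M (traj N eps x0 (Suc t)) (eps r) = 0" if "Suc t < r" for r
    using that by (simp add: cross_moment_affine sq_integrable_noise cross_moment_indep indep_noise mean_noise)
  then show ?case
    using Suc by (simp add: sq_integrable_affine sq_integrable_noise)
qed (use assms in simp)

lemma second_moment_traj_Suc:
  assumes "sq_integrable M x0" "\<And>r. 1 \<le> r \<Longrightarrow> cross_moment M x0 (eps r) = 0"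
  shows "second_moment M (traj N eps x0 (Suc t))
      = N ** second_moment M (traj N eps x0 t) ** transpose N + second_moment M (eps 1)"
proof -
  have "second_moment M (eps (Suc t)) = second_moment M (eps 1)"
    using sq_integrable_noise by (intro second_moment_distr_eq distr_noise) (auto simp: sq_integrable_def)
  then show ?thesis
    using traj_sq_integrable_uncorrelated[OF assms, of N t]
    by (simp add: second_moment_affine sq_integrable_noise)
qed

lemma discounted_second_moment:
  assumes "sq_integrable M x0" "\<And>r. 1 \<le> r \<Longrightarrow> cross_moment M x0 (eps r) = 0"
    and "0 \<le> \<gamma>" "\<gamma> < 1" "\<gamma> * (opnorm N)^2 < 1"
  shows "\<And>t. integrable M (\<lambda>\<omega>. \<gamma>^t *\<^sub>R outer (traj N eps x0 t \<omega>))"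
    and "summable (\<lambda>t. \<integral>\<omega>. norm (\<gamma>^t *\<^sub>R outer (traj N eps x0 t \<omega>)) \<partial>M)"
    and "(\<Sum>t. \<integral>\<omega>. \<gamma>^t *\<^sub>R outer (traj N eps x0 t \<omega>) \<partial>M)
      = discrete_lyapunov \<gamma> N (second_moment M x0 + (\<gamma> / (1 - \<gamma>)) *\<^sub>R second_moment M (eps 1))"
proof -
  define m where "m t = second_moment M (traj N eps x0 t)" for t
  have sq: "sq_integrable M (traj N eps x0 t)" for t
    using traj_sq_integrable_uncorrelated[OF assms(1,2)] by blast
  show int: "integrable M (\<lambda>\<omega>. \<gamma>^t *\<^sub>R outer (traj N eps x0 t \<omega>))" for t
    using sq by (simp add: outer_eq_outer_prod integrable_outer_prod)
  have m_Suc: "m (Suc t) = N ** m t ** transpose N + second_moment M (eps 1)" for t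
    unfolding m_def by (rule second_moment_traj_Suc[OF assms(1,2)])
  note sums = discounted_recursion_sums[where m=m, OF m_Suc assms(3-5)]
  have "(\<integral>\<omega>. norm (\<gamma>^t *\<^sub>R outer (traj N eps x0 t \<omega>)) \<partial>M) = trace (\<gamma>^t *\<^sub>R m t)" for t
    using assms(3) by (simp add: m_def integral_norm_outer sq trace_scaleR)
  then show "summable (\<lambda>t. \<integral>\<omega>. norm (\<gamma>^t *\<^sub>R outer (traj N eps x0 t \<omega>)) \<partial>M)"
    using bounded_linear.summable[OF bounded_linear_trace summable_norm_cancel[OF sums(1)]] by simp
  show "(\<Sum>t. \<integral>\<omega>. \<gamma>^t *\<^sub>R outer (traj N eps x0 t \<omega>) \<partial>M)
      = discrete_lyapunov \<gamma> N (second_moment M x0 + (\<gamma> / (1 - \<gamma>)) *\<^sub>R second_moment M (eps 1))"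
    using sums(2) by (simp add: m_def second_moment_def)
qed

lemma Sigma_mat_eq:
  assumes "0 \<le> \<gamma>" "\<gamma> < 1" "\<gamma> * (opnorm N)^2 < 1"
  shows "Sigma_mat M eps \<gamma> N = discrete_lyapunov \<gamma> N (noise_forcing \<gamma>)"
proof -
  have "cross_moment M (eps 0) (eps r) = 0" if "1 \<le> r" for r
    using that by (intro cross_moment_indep indep_noise sq_integrable_noise mean_noise) auto
  note moments = discounted_second_moment[OF sq_integrable_noise this assms]
  show ?thesis
    unfolding Sigma_mat_def noise_forcing_def
    using integral_suminf_bounded_linear[OF bounded_linear_ident moments(1,2)] moments(3) by simp
qed

lemma cond_cost_eq:
  assumes "0 \<le> \<gamma>" "\<gamma> < 1" "\<gamma> * (opnorm (clmat A B1 B2 K1 K2))^2 < 1"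
  shows "cond_cost M eps \<gamma> A B1 B2 Q R1 R2 K1 K2 x0 =
    trace ((Q + transpose K1 ** R1 ** K1 - transpose K2 ** R2 ** K2)
           ** discrete_lyapunov \<gamma> (clmat A B1 B2 K1 K2) (outer x0 + (\<gamma> / (1 - \<gamma>)) *\<^sub>R second_moment M (eps 1)))"
proof -
  let ?S = "Q + transpose K1 ** R1 ** K1 - transpose K2 ** R2 ** K2"
  note moments = discounted_second_moment[OF sq_integrable_const[of x0]
      cross_moment_const[OF sq_integrable_noise mean_noise] assms]
  have "\<gamma>^t * stage_cost Q R1 R2 K1 K2 y = trace (?S ** (\<gamma>^t *\<^sub>R outer y))" for t y
    by (simp add: stage_cost_eq_trace matrix_scaleR_right trace_scaleR)
  then show ?thesis
    unfolding cond_cost_def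
    using integral_suminf_bounded_linear[OF bounded_linear_trace_mult moments(1,2)] moments(3)
    by (simp add: second_moment_const)
qed

lemma init_cost_eq:
  assumes "0 \<le> \<gamma>" "\<gamma> < 1" "\<gamma> * (opnorm (clmat A B1 B2 K1 K2))^2 < 1"
  shows "init_cost M eps \<gamma> A B1 B2 Q R1 R2 K1 K2 =
    trace ((Q + transpose K1 ** R1 ** K1 - transpose K2 ** R2 ** K2) ** Sigma_mat M eps \<gamma> (clmat A B1 B2 K1 K2))"
proof -
  let ?S = "Q + transpose K1 ** R1 ** K1 - transpose K2 ** R2 ** K2" and ?N = "clmat A B1 B2 K1 K2"
  \<comment> \<open>The conditional cost is affine in \<open>x0 x0\<^sup>T\<close>, so averaging over the law of \<open>\<epsilon>\<^sub>0\<close>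
    replaces \<open>x0 x0\<^sup>T\<close> by its mean.\<close>
  define T where "T V = trace (?S ** discrete_lyapunov \<gamma> ?N V)" for V
  define c where "c = T ((\<gamma> / (1 - \<gamma>)) *\<^sub>R second_moment M (eps 1))"
  have T: "bounded_linear T"
    unfolding T_def using assms
    by (intro bounded_linear_compose[OF bounded_linear_trace_mult bounded_linear_discrete_lyapunov]) auto
  have T_add: "T (V + V') = T V + T V'" for V V'
    by (rule linear_add[OF bounded_linear.linear[OF T]])
  have cost: "cond_cost M eps \<gamma> A B1 B2 Q R1 R2 K1 K2 = (\<lambda>x. T (outer x) + c)"
  proof
    fix x
    have "cond_cost M eps \<gamma> A B1 B2 Q R1 R2 K1 K2 x = T (outer x + (\<gamma> / (1 - \<gamma>)) *\<^sub>R second_moment M (eps 1))"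
      by (simp add: cond_cost_eq[OF assms] T_def)
    then show "cond_cost M eps \<gamma> A B1 B2 Q R1 R2 K1 K2 x = T (outer x) + c"
      by (simp add: T_add c_def)
  qed
  have "continuous_on UNIV (\<lambda>x. T (outer x) + c)"
    by (intro continuous_on_add continuous_on_const continuous_on_compose2[OF linear_continuous_on[OF T]
          continuous_on_outer]) auto
  then have meas: "(\<lambda>x. T (outer x) + c) \<in> borel_measurable borel"
    by (rule borel_measurable_continuous_onI)
  have int: "integrable M (\<lambda>\<omega>. outer (eps 0 \<omega>))"
    using sq_integrable_noise[of 0] by (simp add: outer_eq_outer_prod integrable_outer_prod)
  have "init_cost M eps \<gamma> A B1 B2 Q R1 R2 K1 K2 = (\<integral>\<omega>. T (outer (eps 0 \<omega>)) + c \<partial>M)"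
    unfolding init_cost_def cost
    by (rule integral_distr[OF _ meas]) (use sq_integrable_noise in \<open>simp add: sq_integrable_def\<close>)
  also have "\<dots> = T (second_moment M (eps 0)) + c"
    using integrable_bounded_linear[OF T int]
    by (simp add: second_moment_def prob_space integral_bounded_linear[OF T int])
  also have "\<dots> = T (noise_forcing \<gamma>)"
    by (simp add: noise_forcing_def T_add c_def)
  also have "\<dots> = trace (?S ** Sigma_mat M eps \<gamma> ?N)"
    by (simp add: T_def Sigma_mat_eq[OF assms])
  finally show ?thesis .
qed

end

lemma noise_ok_imp_driving_noise:
  assumes "noise_ok M eps1 eps0"
  shows "driving_noise M eps1" and "driving_noise M eps0"
proof -
  interpret prob_space M using assms unfolding noise_ok_def by (elim conjE)
  define X where "X = (\<lambda>(j::bool, t::nat). if j then eps1 t else eps0 t)"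
  have indep: "indep_vars (\<lambda>_. borel) X UNIV"
    using assms unfolding noise_ok_def X_def by (elim conjE) assumption
  have "\<forall>eps\<in>{eps1, eps0}. (\<forall>t. eps t \<in> borel_measurable M \<and> integrable M (\<lambda>\<omega>. (norm (eps t \<omega>))\<^sup>2)) \<and>
      (\<forall>t\<ge>1. distr M borel (eps t) = distr M borel (eps 1) \<and> (\<integral>\<omega>. eps t \<omega> \<partial>M) = 0)"
    using assms unfolding noise_ok_def by (elim conjE) assumption
  note marginals = bspec[OF this]
  have marginal: "sq_integrable M (eps t)"
    "1 \<le> t \<Longrightarrow> distr M borel (eps t) = distr M borel (eps 1)"
    "1 \<le> t \<Longrightarrow> (\<integral>\<omega>. eps t \<omega> \<partial>M) = 0" if "eps \<in> {eps1, eps0}" for eps t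
    using marginals[OF that] unfolding sq_integrable_def by blast+
  note marginal1 = marginal[OF insertI1]
    and marginal0 = marginal[OF insertI2[OF singletonI]]
  show "driving_noise M eps1"
  proof unfold_locales
    show "indep_var borel (eps1 s) borel (eps1 t)" if "s \<noteq> t" for s t
      using indep_var_of_indep_vars[OF indep, of "(True, s)" "(True, t)"] that by (simp add: X_def)
  qed (fact marginal1)+
  show "driving_noise M eps0"
  proof unfold_locales
    show "indep_var borel (eps0 s) borel (eps0 t)" if "s \<noteq> t" for s t
      using indep_var_of_indep_vars[OF indep, of "(False, s)" "(False, t)"] that by (simp add: X_def)
  qed (fact marginal0)+
qed

section \<open>Gradients of the cost\<close>

lemma Pmat_eq_discrete_lyapunov:
  "Pmat \<gamma> A B1 B2 Q R1 R2 K1 K2 = discrete_lyapunov \<gamma> (transpose (clmat A B1 B2 K1 K2))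
     (Q + transpose K1 ** R1 ** K1 - transpose K2 ** R2 ** K2)"
  by (simp add: Pmat_def discrete_lyapunov_def)

context driving_noise
begin

lemma is_matrix_gradient_trace_Sigma_mat:
  fixes A S :: "real^'d^'d" and B :: "real^'l^'d" and K :: "real^'d^'l" and R :: "real^'l^'l"
  assumes "0 \<le> \<gamma>" "\<gamma> < 1" "transpose R = R" "transpose S = S"
    and stable: "\<gamma> * (opnorm (A + B ** K))^2 < 1"
    and f: "\<And>K. \<gamma> * (opnorm (A + B ** K))^2 < 1 \<Longrightarrow>
      f K = trace ((S + transpose K ** R ** K) ** Sigma_mat M eps \<gamma> (A + B ** K))"
  shows "is_matrix_gradient f K
    (2 *\<^sub>R ((R ** K + \<gamma> *\<^sub>R (transpose B ** discrete_lyapunov \<gamma> (transpose (A + B ** K)) (S + transpose K ** R ** K)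
                 ** (A + B ** K))) ** Sigma_mat M eps \<gamma> (A + B ** K)))"
proof -
  have "\<forall>\<^sub>F K' in nhds K. \<gamma> * (opnorm (A + B ** K'))^2 < 1"
    using stable by (intro eventually_scaled_opnorm_less) (auto intro!: tendsto_eq_intros filterlim_ident)
  then have "\<forall>\<^sub>F K' in nhds K.
      trace ((S + transpose K' ** R ** K') ** discrete_lyapunov \<gamma> (A + B ** K') (noise_forcing \<gamma>)) = f K'"
    by eventually_elim (simp add: f Sigma_mat_eq assms(1,2))
  moreover have "Sigma_mat M eps \<gamma> (A + B ** K) = discrete_lyapunov \<gamma> (A + B ** K) (noise_forcing \<gamma>)"
    by (rule Sigma_mat_eq[OF assms(1,2) stable])
  ultimately show ?thesis
    using is_matrix_gradient_lyapunov_cost[OF assms(1) stable assms(3,4) symmetric_noise_forcing]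
    by (simp add: is_matrix_gradient_cong_eventually)
qed

lemma is_matrix_gradient_init_cost_K1:
  assumes "0 \<le> \<gamma>" "\<gamma> < 1" "transpose Q = Q" "transpose R1 = R1" "transpose R2 = R2"
    and "\<gamma> * (opnorm (clmat A B1 B2 K1 K2))^2 < 1"
  shows "is_matrix_gradient (\<lambda>K. init_cost M eps \<gamma> A B1 B2 Q R1 R2 K K2) K1
    (2 *\<^sub>R (Emat1 \<gamma> A B1 B2 Q R1 R2 K1 K2 ** Sigma_mat M eps \<gamma> (clmat A B1 B2 K1 K2)))"
proof -
  define M0 where "M0 = A + B2 ** K2"
  define S0 where "S0 = Q - transpose K2 ** R2 ** K2"
  have closed_loop: "clmat A B1 B2 K K2 = M0 + (- B1) ** K" for K
    by (simp add: clmat_def M0_def matrix_uminus_left)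
  have cost: "Q + transpose K ** R1 ** K - transpose K2 ** R2 ** K2 = S0 + transpose K ** R1 ** K" for K
    by (simp add: S0_def)
  have "transpose S0 = S0" by (simp add: S0_def matrix_algebra_simps assms(3,5))
  then have "is_matrix_gradient (\<lambda>K. init_cost M eps \<gamma> A B1 B2 Q R1 R2 K K2) K1
    (2 *\<^sub>R ((R1 ** K1 + \<gamma> *\<^sub>R (transpose (- B1)
        ** discrete_lyapunov \<gamma> (transpose (M0 + (- B1) ** K1)) (S0 + transpose K1 ** R1 ** K1)
        ** (M0 + (- B1) ** K1))) ** Sigma_mat M eps \<gamma> (M0 + (- B1) ** K1)))"
    using assms(6)
    by (intro is_matrix_gradient_trace_Sigma_mat[OF assms(1,2,4)])
      (simp_all add: init_cost_eq[OF assms(1,2)] flip: closed_loop cost)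
  then show ?thesis
    by (simp add: Emat1_def Let_def Pmat_eq_discrete_lyapunov closed_loop cost
        M0_def matrix_algebra_simps algebra_simps)
qed

lemma is_matrix_gradient_init_cost_K2:
  assumes "0 \<le> \<gamma>" "\<gamma> < 1" "transpose Q = Q" "transpose R1 = R1" "transpose R2 = R2"
    and "\<gamma> * (opnorm (clmat A B1 B2 K1 K2))^2 < 1"
  shows "is_matrix_gradient (\<lambda>K. init_cost M eps \<gamma> A B1 B2 Q R1 R2 K1 K) K2
    (2 *\<^sub>R (Emat2 \<gamma> A B1 B2 Q R1 R2 K1 K2 ** Sigma_mat M eps \<gamma> (clmat A B1 B2 K1 K2)))"
proof -
  define M0 where "M0 = A - B1 ** K1"
  define S0 where "S0 = Q + transpose K1 ** R1 ** K1"
  have closed_loop: "clmat A B1 B2 K1 K = M0 + B2 ** K" for K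
    by (simp add: clmat_def M0_def)
  have cost: "Q + transpose K1 ** R1 ** K1 - transpose K ** R2 ** K = S0 + transpose K ** (- R2) ** K" for K
    by (simp add: S0_def matrix_uminus_left matrix_uminus_right)
  have "transpose (- R2) = - R2" by (simp add: transpose_uminus assms(5))
  moreover have "transpose S0 = S0" by (simp add: S0_def matrix_algebra_simps assms(3,4))
  ultimately have "is_matrix_gradient (\<lambda>K. init_cost M eps \<gamma> A B1 B2 Q R1 R2 K1 K) K2
    (2 *\<^sub>R ((- R2 ** K2 + \<gamma> *\<^sub>R (transpose B2
        ** discrete_lyapunov \<gamma> (transpose (M0 + B2 ** K2)) (S0 + transpose K2 ** (- R2) ** K2)
        ** (M0 + B2 ** K2))) ** Sigma_mat M eps \<gamma> (M0 + B2 ** K2)))"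
    using assms(6)
    by (intro is_matrix_gradient_trace_Sigma_mat[OF assms(1,2)])
      (simp_all add: init_cost_eq[OF assms(1,2)] flip: closed_loop cost)
  then show ?thesis
    by (simp add: Emat2_def Let_def Pmat_eq_discrete_lyapunov closed_loop cost
        M0_def matrix_algebra_simps algebra_simps)
qed

end

theorem mainTheorem16:
  fixes M :: "'a measure"
    and eps1 eps0 :: "nat \<Rightarrow> 'a \<Rightarrow> real^'d"
    and \<gamma> :: real
    and A Ab Q Qb :: "real^'d^'d"
    and B1 B1b B2 B2b :: "real^'l^'d"
    and R1 R1b R2 R2b :: "real^'l^'l"
    and K1 L1 K2 L2 :: "real^'d^'l"
  assumes "0 \<le> \<gamma>" and "\<gamma> < 1"
    and "transpose Q = Q" and "transpose Qb = Qb"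
    and "transpose R1 = R1" and "transpose R1b = R1b"
    and "transpose R2 = R2" and "transpose R2b = R2b"
    and "noise_ok M eps1 eps0"
    and "((K1, L1), (K2, L2)) \<in> Theta \<gamma> A Ab B1 B1b B2 B2b"
  shows
    "is_matrix_gradient
       (\<lambda>K. total_cost M eps1 eps0 \<gamma> A Ab B1 B1b B2 B2b Q Qb R1 R1b R2 R2b (K, L1) (K2, L2)) K1
       (2 *\<^sub>R (Emat1 \<gamma> A B1 B2 Q R1 R2 K1 K2 ** Sigma_mat M eps1 \<gamma> (clmat A B1 B2 K1 K2)))
   \<and> is_matrix_gradient
       (\<lambda>K. total_cost M eps1 eps0 \<gamma> A Ab B1 B1b B2 B2b Q Qb R1 R1b R2 R2b (K1, L1) (K, L2)) K2
       (2 *\<^sub>R (Emat2 \<gamma> A B1 B2 Q R1 R2 K1 K2 ** Sigma_mat M eps1 \<gamma> (clmat A B1 B2 K1 K2)))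
   \<and> is_matrix_gradient
       (\<lambda>L. total_cost M eps1 eps0 \<gamma> A Ab B1 B1b B2 B2b Q Qb R1 R1b R2 R2b (K1, L) (K2, L2)) L1
       (2 *\<^sub>R (Emat1 \<gamma> (A + Ab) (B1 + B1b) (B2 + B2b) (Q + Qb) (R1 + R1b) (R2 + R2b) L1 L2
               ** Sigma_mat M eps0 \<gamma> (clmat (A + Ab) (B1 + B1b) (B2 + B2b) L1 L2)))
   \<and> is_matrix_gradient
       (\<lambda>L. total_cost M eps1 eps0 \<gamma> A Ab B1 B1b B2 B2b Q Qb R1 R1b R2 R2b (K1, L1) (K2, L)) L2
       (2 *\<^sub>R (Emat2 \<gamma> (A + Ab) (B1 + B1b) (B2 + B2b) (Q + Qb) (R1 + R1b) (R2 + R2b) L1 L2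
               ** Sigma_mat M eps0 \<gamma> (clmat (A + Ab) (B1 + B1b) (B2 + B2b) L1 L2)))"
proof -
  interpret y: driving_noise M eps1 using noise_ok_imp_driving_noise(1)[OF assms(9)] .
  interpret z: driving_noise M eps0 using noise_ok_imp_driving_noise(2)[OF assms(9)] .
  have stable_y: "\<gamma> * (opnorm (clmat A B1 B2 K1 K2))^2 < 1"
    and stable_z: "\<gamma> * (opnorm (clmat (A + Ab) (B1 + B1b) (B2 + B2b) L1 L2))^2 < 1"
    using assms(10) by (auto simp: Theta_def)
  have sym_z: "transpose (Q + Qb) = Q + Qb" "transpose (R1 + R1b) = R1 + R1b" "transpose (R2 + R2b) = R2 + R2b"
    using assms(3-8) by (simp_all add: transpose_add)
  show ?thesis
    unfolding total_cost_def prod.case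
    using y.is_matrix_gradient_init_cost_K1[OF assms(1,2,3,5,7) stable_y]
      y.is_matrix_gradient_init_cost_K2[OF assms(1,2,3,5,7) stable_y]
      z.is_matrix_gradient_init_cost_K1[OF assms(1,2) sym_z stable_z]
      z.is_matrix_gradient_init_cost_K2[OF assms(1,2) sym_z stable_z]
    by (simp add: is_matrix_gradient_add_const)
qed

end
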